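(* Let $n,k,s$ be positive integers with $2\le s\le\lfloor n/k\rfloor$, write $n=ds+s_0$ with $d=\lfloor n/s\rfloor$ and $s_0=n\bmod s$, and assume $s_0<\min\{d,s\}$. Under the repair-by-transfer model, every Fixed Cluster Repair System scheme with these parameters storing a file of entropy $M$ has repair bandwidth $$\gamma=d\beta\ \ge\ \gamma_{cc}(n,k,s):=\frac{M d^{s}}{\min\left\{d^{s+1}-\prod_{i=1}^{s+1}(d-k_i)\ :\ k_i\in\mathbb Z_{\ge0},\ \sum_{i=1}^{s+1}k_i=k,\ k_{s+1}\le s_0\right\}},$$ and the Cubic Code achieves $\gamma=\gamma_{cc}(n,k,s)$; i.e. Cubic Codes achieve the minimum repair bandwidth under repair-by-transfer for arbitrary such parameters.
   Context: FCRS: $n=ds+s_0$ servers in clusters $1,\dots,s$ of size $d$ and cluster $s+1$ of size $s_0$; server $(i,j)$, $(i,j)\in([s]\times[d])\cup(\{s+1\}\times[s_0])$, stores a random variable $X^{(i)}_j$, a function of the file $\mathcal M$ ($H(\mathcal M)=M$), with $H(X^{(i)}_j)\le\alpha$. Data recovery: any $k$ servers, from any clusters, determine $\mathcal M$. Exact repair: for every server $(r,\ell)$ and every repair cluster $i\in[s]$, $i\ne r$, each server $(i,j)$, $j\in[d]$, sends $Y^{(r,i)}_{\ell,j}$, a function of $X^{(i)}_j$ with $H(Y^{(r,i)}_{\ell,j})\le\beta$, and $X^{(r)}_\ell$ is a function of $Y^{(r,i)}_{\ell,[d]}=(Y^{(r,i)}_{\ell,1},\dots,Y^{(r,i)}_{\ell,d})$.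 Repair-by-transfer (in the broad sense used here): additionally $H(Y^{(r,i)}_{\ell,[d]}\mid X^{(r)}_\ell)=0$. Repair bandwidth $\gamma=d\beta$. Cubic Code: split the file into $m$ chunks of size $M/m$ and encode with a $(d^{s+1},m)$ MDS code whose symbols $C_b$ are indexed by strings $b=b_{s+1}\cdots b_1$, $b_i\in[d]$. Server $(i,j)$ stores $\{C_b:b_i=j\}$ (so $d^s$ symbols). To repair $(r,\ell)$ from cluster $i$, server $(i,j)$ sends $\{C_b:b_i=j,\ b_r=\ell\}$. Here $m=\min\{d^{s+1}-\prod_{i=1}^{s+1}(d-k_i):k_i\ge0,\ \sum k_i=k,\ k_{s+1}\le s_0\}$, so that any $k$ servers recover the file. *)

theory Defs
  imports "HOL-Probability.Probability" "HOL-Library.FuncSet"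
begin

definition ent :: "'f pmf \<Rightarrow> ('f \<Rightarrow> 'a) \<Rightarrow> real" where
  "ent P X = (\<Sum>x\<in>set_pmf (map_pmf X P).
      - (pmf (map_pmf X P) x * log 2 (pmf (map_pmf X P) x)))"

definition cond_ent :: "'f pmf \<Rightarrow> ('f \<Rightarrow> 'b) \<Rightarrow> ('f \<Rightarrow> 'a) \<Rightarrow> real" where
  "cond_ent P Y X = ent P (\<lambda>f. (X f, Y f)) - ent P X"

definition is_fun_of :: "'f pmf \<Rightarrow> ('f \<Rightarrow> 'a) \<Rightarrow> ('f \<Rightarrow> 'b) \<Rightarrow> bool" where
  "is_fun_of P X Z = (\<exists>g. \<forall>f\<in>set_pmf P. X f = g (Z f))"

definition fcrs_d :: "nat \<Rightarrow> nat \<Rightarrow> nat" where "fcrs_d n s = n div s"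
definition fcrs_s0 :: "nat \<Rightarrow> nat \<Rightarrow> nat" where "fcrs_s0 n s = n mod s"

definition servers :: "nat \<Rightarrow> nat \<Rightarrow> (nat \<times> nat) set" where
  "servers n s = ({1..s} \<times> {1..fcrs_d n s}) \<union> ({s+1} \<times> {1..fcrs_s0 n s})"

text \<open>X (i,j) is the content of server (i,j); Y r l i j is the message sent by server (i,j)
  (of repair cluster i) to repair server (r,l).\<close>
definition fcrs ::
  "nat \<Rightarrow> nat \<Rightarrow> nat \<Rightarrow> 'f pmf \<Rightarrow> (nat \<times> nat \<Rightarrow> 'f \<Rightarrow> 'a)
     \<Rightarrow> (nat \<Rightarrow> nat \<Rightarrow> nat \<Rightarrow> nat \<Rightarrow> 'f \<Rightarrow> 'b) \<Rightarrow> real \<Rightarrow> real \<Rightarrow> bool" where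
  "fcrs n k s P X Y \<alpha> \<beta> \<longleftrightarrow>
     finite (set_pmf P) \<and>
     (\<forall>v\<in>servers n s. ent P (X v) \<le> \<alpha>) \<and>
     (\<forall>K. K \<subseteq> servers n s \<and> card K = k \<longrightarrow> is_fun_of P id (\<lambda>f. (\<lambda>v\<in>K. X v f))) \<and>
     (\<forall>(r,l)\<in>servers n s. \<forall>i\<in>{1..s}. i \<noteq> r \<longrightarrow>
        (\<forall>j\<in>{1..fcrs_d n s}. is_fun_of P (Y r l i j) (X (i,j)) \<and> ent P (Y r l i j) \<le> \<beta>) \<and>
        is_fun_of P (X (r,l)) (\<lambda>f. (\<lambda>j\<in>{1..fcrs_d n s}. Y r l i j f)))"

definition fcrs_rbt ::
  "nat \<Rightarrow> nat \<Rightarrow> nat \<Rightarrow> 'f pmf \<Rightarrow> (nat \<times> nat \<Rightarrow> 'f \<Rightarrow> 'a)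
     \<Rightarrow> (nat \<Rightarrow> nat \<Rightarrow> nat \<Rightarrow> nat \<Rightarrow> 'f \<Rightarrow> 'b) \<Rightarrow> real \<Rightarrow> real \<Rightarrow> bool" where
  "fcrs_rbt n k s P X Y \<alpha> \<beta> \<longleftrightarrow>
     fcrs n k s P X Y \<alpha> \<beta> \<and>
     (\<forall>(r,l)\<in>servers n s. \<forall>i\<in>{1..s}. i \<noteq> r \<longrightarrow>
        cond_ent P (\<lambda>f. (\<lambda>j\<in>{1..fcrs_d n s}. Y r l i j f)) (X (r,l)) = 0)"

definition cc_m :: "nat \<Rightarrow> nat \<Rightarrow> nat \<Rightarrow> int" where
  "cc_m n k s = Min {int (fcrs_d n s) ^ (s+1) - (\<Prod>i\<in>{1..s+1}. int (fcrs_d n s) - int (ki i)) | ki.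
      ki \<in> {1..s+1} \<rightarrow>\<^sub>E (UNIV :: nat set) \<and> (\<Sum>i\<in>{1..s+1}. ki i) = k \<and> ki (s+1) \<le> fcrs_s0 n s}"

definition gamma_cc :: "nat \<Rightarrow> nat \<Rightarrow> nat \<Rightarrow> real \<Rightarrow> real" where
  "gamma_cc n k s M = M * real (fcrs_d n s) ^ s / real_of_int (cc_m n k s)"

text \<open>Index strings b = b_{s+1} ... b_1 with b_i in [d], as functions on {1..s+1}.\<close>
definition cc_strings :: "nat \<Rightarrow> nat \<Rightarrow> (nat \<Rightarrow> nat) set" where
  "cc_strings n s = {1..s+1} \<rightarrow>\<^sub>E {1..fcrs_d n s}"

text \<open>A (d^{s+1}, m) MDS code (information-theoretic form): enc f b is the symbol C_b
  of the codeword of file f; each symbol has entropy at most M/m and any m symbols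
  determine the file.\<close>
definition is_MDS :: "nat \<Rightarrow> nat \<Rightarrow> nat \<Rightarrow> 'f pmf \<Rightarrow> ('f \<Rightarrow> (nat \<Rightarrow> nat) \<Rightarrow> 'c) \<Rightarrow> bool" where
  "is_MDS n k s P enc \<longleftrightarrow>
     finite (set_pmf P) \<and>
     (\<forall>b\<in>cc_strings n s. ent P (\<lambda>f. enc f b) \<le> ent P id / real_of_int (cc_m n k s)) \<and>
     (\<forall>T. T \<subseteq> cc_strings n s \<and> int (card T) = cc_m n k s \<longrightarrow>
          is_fun_of P id (\<lambda>f. (\<lambda>b\<in>T. enc f b)))"

definition cc_X :: "nat \<Rightarrow> nat \<Rightarrow> ('f \<Rightarrow> (nat \<Rightarrow> nat) \<Rightarrow> 'c)
     \<Rightarrow> nat \<times> nat \<Rightarrow> 'f \<Rightarrow> ((nat \<Rightarrow> nat) \<Rightarrow> 'c)" where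
  "cc_X n s enc v f = (\<lambda>b\<in>{b\<in>cc_strings n s. b (fst v) = snd v}. enc f b)"

definition cc_Y :: "nat \<Rightarrow> nat \<Rightarrow> ('f \<Rightarrow> (nat \<Rightarrow> nat) \<Rightarrow> 'c)
     \<Rightarrow> nat \<Rightarrow> nat \<Rightarrow> nat \<Rightarrow> nat \<Rightarrow> 'f \<Rightarrow> ((nat \<Rightarrow> nat) \<Rightarrow> 'c)" where
  "cc_Y n s enc r l i j f = (\<lambda>b\<in>{b\<in>cc_strings n s. b i = j \<and> b r = l}. enc f b)"

end

(*
  Model the scheme by the entropy polymatroid of all node contents and repair
  messages.  Take k_1, ..., k_(s+1) attaining the minimum m and, in every cluster i <= s, a cyclic
  window of k_i consecutive servers; together with k_(s+1) servers of the last cluster these are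
  k servers, so they determine the file.  Average their joint entropy over all d^s positions of
  the windows and add the clusters one at a time.  Since a node can be repaired by transfer from
  every earlier cluster, a version of Han's inequality for cyclic windows shows that a node still
  adds at most a fraction prod (d - k_i) / d of its entropy (at most d beta) on average.  This
  gives d^s M <= d beta (d^(s+1) - prod (d - k_i)) = d beta m.

  In the Cubic Code any k servers store the symbols of at least m index strings,
  which determine the file by the MDS property, and a repair message consists of d^(s-1) symbols.
  Reed-Solomon codes over a prime field with more than d^(s+1) elements are MDS codes.
*)

theory Submission
  imports Defs "HOL-Computational_Algebra.Polynomial" "HOL-Computational_Algebra.Primes"
    "HOL-Number_Theory.Cong"
begin

section \<open>Entropy of random variables with finite support\<close>

lemma pmf_map_pmf_finite:
  assumes "finite (set_pmf P)"
  shows "pmf (map_pmf X P) x = (\<Sum>\<omega>\<in>{\<omega>\<in>set_pmf P. X \<omega> = x}. pmf P \<omega>)"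
proof -
  have "pmf (map_pmf X P) x = measure P (X -` {x} \<inter> set_pmf P)"
    by (simp add: pmf_map measure_Int_set_pmf)
  also have "\<dots> = (\<Sum>\<omega>\<in>X -` {x} \<inter> set_pmf P. pmf P \<omega>)"
    using assms by (subst measure_measure_pmf_finite) auto
  also have "X -` {x} \<inter> set_pmf P = {\<omega>\<in>set_pmf P. X \<omega> = x}" by auto
  finally show ?thesis .
qed

lemma sum_map_pmf_finite:
  assumes "finite (set_pmf P)"
  shows "(\<Sum>\<omega>\<in>set_pmf P. pmf P \<omega> * g (X \<omega>))
       = (\<Sum>x\<in>set_pmf (map_pmf X P). pmf (map_pmf X P) x * g x)"
proof -
  have "(\<Sum>\<omega>\<in>set_pmf P. pmf P \<omega> * g (X \<omega>))
      = (\<Sum>x\<in>X ` set_pmf P. \<Sum>\<omega>\<in>{\<omega>\<in>set_pmf P. X \<omega> = x}. pmf P \<omega> * g (X \<omega>))"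
    using assms by (rule sum.image_gen)
  also have "\<dots> = (\<Sum>x\<in>X ` set_pmf P. pmf (map_pmf X P) x * g x)"
    by (intro sum.cong refl) (simp add: pmf_map_pmf_finite[OF assms] sum_distrib_right)
  finally show ?thesis by simp
qed

lemma ent_altdef:
  assumes "finite (set_pmf P)"
  shows "ent P X = - (\<Sum>\<omega>\<in>set_pmf P. pmf P \<omega> * log 2 (pmf (map_pmf X P) (X \<omega>)))"
  using sum_map_pmf_finite[OF assms, of "\<lambda>x. log 2 (pmf (map_pmf X P) x)" X]
  by (simp add: ent_def sum_negf)

lemma pmf_map_pmf_pos: "\<omega> \<in> set_pmf P \<Longrightarrow> 0 < pmf (map_pmf V P) (V \<omega>)"
  by (simp add: pmf_positive)

lemma ent_const: "ent P (\<lambda>\<omega>. c) = 0"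
  by (simp add: ent_def map_pmf_const)

lemma ent_cong_level_sets:
  assumes fin: "finite (set_pmf P)"
    and eq: "\<And>\<omega> \<omega>'. \<omega> \<in> set_pmf P \<Longrightarrow> \<omega>' \<in> set_pmf P \<Longrightarrow> X \<omega>' = X \<omega> \<longleftrightarrow> Z \<omega>' = Z \<omega>"
  shows "ent P X = ent P Z"
proof -
  have "pmf (map_pmf X P) (X \<omega>) = pmf (map_pmf Z P) (Z \<omega>)" if "\<omega> \<in> set_pmf P" for \<omega>
    unfolding pmf_map_pmf_finite[OF fin] by (intro sum.cong refl) (use eq that in auto)
  then show ?thesis by (simp add: ent_altdef[OF fin])
qed

lemma ent_comp_inj:
  assumes "finite (set_pmf P)" and "inj f"
  shows "ent P (\<lambda>\<omega>. f (X \<omega>)) = ent P X"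
  using assms by (intro ent_cong_level_sets) (auto simp: inj_eq)

lemma ent_le_pair:
  assumes fin: "finite (set_pmf P)"
  shows "ent P X \<le> ent P (\<lambda>\<omega>. (X \<omega>, Z \<omega>))"
proof -
  have "pmf P \<omega> * log 2 (pmf (map_pmf (\<lambda>\<omega>. (X \<omega>, Z \<omega>)) P) (X \<omega>, Z \<omega>))
      \<le> pmf P \<omega> * log 2 (pmf (map_pmf X P) (X \<omega>))" if \<omega>: "\<omega> \<in> set_pmf P" for \<omega>
  proof -
    have "0 < pmf (map_pmf (\<lambda>\<omega>. (X \<omega>, Z \<omega>)) P) (X \<omega>, Z \<omega>)"
      using pmf_map_pmf_pos[OF \<omega>] .
    moreover have "pmf (map_pmf (\<lambda>\<omega>. (X \<omega>, Z \<omega>)) P) (X \<omega>, Z \<omega>) \<le> pmf (map_pmf X P) (X \<omega>)"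
      unfolding pmf_map_pmf_finite[OF fin] by (rule sum_mono2) (use fin in auto)
    ultimately show ?thesis by (intro mult_left_mono) auto
  qed
  then show ?thesis unfolding ent_altdef[OF fin] by (simp add: sum_mono)
qed

lemma ent_pair_is_fun_of:
  assumes "finite (set_pmf P)" and "is_fun_of P X Z"
  shows "ent P (\<lambda>\<omega>. (Z \<omega>, X \<omega>)) = ent P Z"
  using assms by (intro ent_cong_level_sets) (auto simp: is_fun_of_def)

lemma ent_le_if_is_fun_of:
  assumes "finite (set_pmf P)" and "is_fun_of P X Z"
  shows "ent P X \<le> ent P Z"
proof -
  have "ent P X \<le> ent P (\<lambda>\<omega>. (X \<omega>, Z \<omega>))" by (rule ent_le_pair[OF assms(1)])
  also have "\<dots> = ent P (\<lambda>\<omega>. (Z \<omega>, X \<omega>))" by (rule ent_cong_level_sets[OF assms(1)]) auto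
  also have "\<dots> = ent P Z" by (rule ent_pair_is_fun_of[OF assms])
  finally show ?thesis .
qed

lemma cond_ent_eq_0_if_is_fun_of:
  "finite (set_pmf P) \<Longrightarrow> is_fun_of P Y X \<Longrightarrow> cond_ent P Y X = 0"
  by (simp add: cond_ent_def ent_pair_is_fun_of)

lemma is_fun_of_trans: "is_fun_of P X Y \<Longrightarrow> is_fun_of P Y Z \<Longrightarrow> is_fun_of P X Z"
  unfolding is_fun_of_def by (metis comp_apply)

lemma information_space_set_pmf:
  "information_space (restrict_space (measure_pmf P) (set_pmf P)) 2"
  by (intro information_space.intro prob_space_restrict_space information_space_axioms.intro)
    (auto simp: measure_pmf.emeasure_eq_1_AE AE_measure_pmf)

lemma simple_distributed_set_pmf:
  assumes "finite (set_pmf P)"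
  shows "simple_distributed (restrict_space (measure_pmf P) (set_pmf P)) X (pmf (map_pmf X P))"
proof -
  interpret information_space "restrict_space (measure_pmf P) (set_pmf P)" 2
    by (rule information_space_set_pmf)
  show ?thesis
  proof (rule simple_distributedI)
    show "simple_function (restrict_space (measure_pmf P) (set_pmf P)) X"
      using assms by (auto simp: simple_function_def space_restrict_space sets_restrict_space)
    fix x
    show "pmf (map_pmf X P) x = measure (restrict_space (measure_pmf P) (set_pmf P))
        (X -` {x} \<inter> space (restrict_space (measure_pmf P) (set_pmf P)))"
      by (simp add: space_restrict_space measure_restrict_space pmf_map measure_Int_set_pmf)
  qed simp
qed

lemma ent_le_log_card:
  assumes fin: "finite (set_pmf P)"
  shows "ent P X \<le> log 2 (card (X ` set_pmf P))"
proof -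
  interpret information_space "restrict_space (measure_pmf P) (set_pmf P)" 2
    by (rule information_space_set_pmf)
  note sd = simple_distributed_set_pmf[OF fin, of X]
  show ?thesis
    using entropy_simple_distributed[OF sd] entropy_le_card[OF sd]
    by (simp add: ent_def space_restrict_space sum_negf)
qed

lemma ent_le_log_card_subset:
  assumes "finite (set_pmf P)" and "X ` set_pmf P \<subseteq> A" and "finite A"
  shows "ent P X \<le> log 2 (card A)"
proof -
  have "0 < card (X ` set_pmf P)"
    using assms(1) set_pmf_not_empty by (auto simp: card_gt_0_iff)
  moreover have "card (X ` set_pmf P) \<le> card A" using assms(2,3) by (rule card_mono[rotated])
  ultimately have "log 2 (card (X ` set_pmf P)) \<le> log 2 (card A)" by simp
  with ent_le_log_card[OF assms(1), of X] show ?thesis by linarith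
qed

lemma ent_pmf_of_set:
  assumes "finite S" "S \<noteq> {}"
  shows "ent (pmf_of_set S) id = log 2 (card S)"
  using assms by (simp add: ent_def log_divide)

text \<open>Submodularity is the nonnegativity of the conditional mutual information \<open>I(X; Y | Z)\<close>.\<close>

lemma ent_submodular:
  assumes fin: "finite (set_pmf P)"
  shows "ent P (\<lambda>\<omega>. (X \<omega>, Y \<omega>, Z \<omega>)) + ent P Z \<le> ent P (\<lambda>\<omega>. (X \<omega>, Z \<omega>)) + ent P (\<lambda>\<omega>. (Y \<omega>, Z \<omega>))"
proof -
  define M where "M = restrict_space (measure_pmf P) (set_pmf P)"
  interpret information_space M 2
    unfolding M_def by (rule information_space_set_pmf)
  have sf: "simple_function M V" for V :: "_ \<Rightarrow> 'z"
    using fin by (auto simp: M_def simple_function_def space_restrict_space sets_restrict_space)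
  note sd = simple_distributed_set_pmf[OF fin, folded M_def]
  let ?p = "\<lambda>V. pmf (map_pmf V P)"
  let ?XYZ = "\<lambda>\<omega>. (X \<omega>, Y \<omega>, Z \<omega>)" and ?XZ = "\<lambda>\<omega>. (X \<omega>, Z \<omega>)" and ?YZ = "\<lambda>\<omega>. (Y \<omega>, Z \<omega>)"
  have "0 \<le> conditional_mutual_information 2 (count_space (X ` space M))
      (count_space (Y ` space M)) (count_space (Z ` space M)) X Y Z"
    by (rule conditional_mutual_information_nonneg[OF sf sf sf])
  also have "\<dots> = (\<Sum>(x, y, z)\<in>?XYZ ` space M.
      ?p ?XYZ (x, y, z) * log 2 (?p ?XYZ (x, y, z) / (?p ?XZ (x, z) * (?p ?YZ (y, z) / ?p Z z))))"
    by (rule conditional_mutual_information_eq[OF sd sd sd sd])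
  also have "\<dots> = (\<Sum>\<omega>\<in>set_pmf P. pmf P \<omega> *
      log 2 (?p ?XYZ (?XYZ \<omega>) / (?p ?XZ (?XZ \<omega>) * (?p ?YZ (?YZ \<omega>) / ?p Z (Z \<omega>)))))"
    using sum_map_pmf_finite[OF fin, of "\<lambda>(x, y, z).
      log 2 (?p ?XYZ (x, y, z) / (?p ?XZ (x, z) * (?p ?YZ (y, z) / ?p Z z)))" ?XYZ]
    by (simp add: M_def space_restrict_space case_prod_beta)
  also have "\<dots> = (\<Sum>\<omega>\<in>set_pmf P. pmf P \<omega> * log 2 (?p ?XYZ (?XYZ \<omega>))
      - pmf P \<omega> * log 2 (?p ?XZ (?XZ \<omega>)) - pmf P \<omega> * log 2 (?p ?YZ (?YZ \<omega>))
      + pmf P \<omega> * log 2 (?p Z (Z \<omega>)))"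
  proof (intro sum.cong refl)
    fix \<omega> assume \<omega>: "\<omega> \<in> set_pmf P"
    note pos = pmf_map_pmf_pos[OF \<omega>, of ?XYZ] pmf_map_pmf_pos[OF \<omega>, of ?XZ]
      pmf_map_pmf_pos[OF \<omega>, of ?YZ] pmf_map_pmf_pos[OF \<omega>, of Z]
    show "pmf P \<omega> * log 2 (?p ?XYZ (?XYZ \<omega>) / (?p ?XZ (?XZ \<omega>) * (?p ?YZ (?YZ \<omega>) / ?p Z (Z \<omega>))))
      = pmf P \<omega> * log 2 (?p ?XYZ (?XYZ \<omega>)) - pmf P \<omega> * log 2 (?p ?XZ (?XZ \<omega>))
        - pmf P \<omega> * log 2 (?p ?YZ (?YZ \<omega>)) + pmf P \<omega> * log 2 (?p Z (Z \<omega>))"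
      using pos by (simp add: log_divide log_mult algebra_simps)
  qed
  finally show ?thesis
    using fin by (simp add: ent_altdef sum.distrib sum_subtractf)
qed

section \<open>Polymatroids\<close>

definition joint_ent :: "'f pmf \<Rightarrow> ('i \<Rightarrow> 'f \<Rightarrow> 'v) \<Rightarrow> 'i set \<Rightarrow> real" where
  "joint_ent P V A = ent P (\<lambda>\<omega>. restrict (\<lambda>i. V i \<omega>) A)"

lemma restrict_eq_restrict_iff: "restrict f A = restrict g A \<longleftrightarrow> (\<forall>i\<in>A. f i = g i)"
  by (auto simp: restrict_def fun_eq_iff)

lemma joint_ent_empty: "joint_ent P V {} = 0"
  by (simp add: joint_ent_def restrict_def ent_const)

lemma joint_ent_singleton: "finite (set_pmf P) \<Longrightarrow> joint_ent P V {i} = ent P (V i)"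
  unfolding joint_ent_def by (rule ent_cong_level_sets) (auto simp: restrict_eq_restrict_iff)

lemma joint_ent_mono:
  assumes "finite (set_pmf P)" and "A \<subseteq> B"
  shows "joint_ent P V A \<le> joint_ent P V B"
  unfolding joint_ent_def
proof (rule ent_le_if_is_fun_of[OF assms(1)])
  show "is_fun_of P (\<lambda>\<omega>. restrict (\<lambda>i. V i \<omega>) A) (\<lambda>\<omega>. restrict (\<lambda>i. V i \<omega>) B)"
    unfolding is_fun_of_def using assms(2)
    by (intro exI[of _ "\<lambda>F. restrict F A"]) (auto simp: restrict_def fun_eq_iff)
qed

lemma joint_ent_submodular:
  assumes fin: "finite (set_pmf P)"
  shows "joint_ent P V (A \<union> B) + joint_ent P V (A \<inter> B) \<le> joint_ent P V A + joint_ent P V B"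
proof -
  let ?r = "\<lambda>C \<omega>. restrict (\<lambda>i. V i \<omega>) C"
  have "joint_ent P V (A \<union> B) = ent P (\<lambda>\<omega>. (?r (A - B) \<omega>, ?r (B - A) \<omega>, ?r (A \<inter> B) \<omega>))"
    and "joint_ent P V A = ent P (\<lambda>\<omega>. (?r (A - B) \<omega>, ?r (A \<inter> B) \<omega>))"
    and "joint_ent P V B = ent P (\<lambda>\<omega>. (?r (B - A) \<omega>, ?r (A \<inter> B) \<omega>))"
    unfolding joint_ent_def
    by (rule ent_cong_level_sets[OF fin]; auto simp: restrict_eq_restrict_iff)+
  then show ?thesis
    using ent_submodular[OF fin] by (simp add: joint_ent_def)
qed

lemma joint_ent_Un_if_is_fun_of:
  assumes fin: "finite (set_pmf P)"
    and f: "is_fun_of P (\<lambda>\<omega>. restrict (\<lambda>i. V i \<omega>) A) (\<lambda>\<omega>. restrict (\<lambda>i. V i \<omega>) B)"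
  shows "joint_ent P V (A \<union> B) = joint_ent P V B"
proof (rule antisym)
  obtain g where g: "\<And>\<omega>. \<omega> \<in> set_pmf P \<Longrightarrow> restrict (\<lambda>i. V i \<omega>) A = g (restrict (\<lambda>i. V i \<omega>) B)"
    using f unfolding is_fun_of_def by blast
  have "is_fun_of P (\<lambda>\<omega>. restrict (\<lambda>i. V i \<omega>) (A \<union> B)) (\<lambda>\<omega>. restrict (\<lambda>i. V i \<omega>) B)"
    unfolding is_fun_of_def
  proof (intro exI[of _ "\<lambda>F. \<lambda>i\<in>A \<union> B. if i \<in> B then F i else g F i"] ballI)
    fix \<omega> assume "\<omega> \<in> set_pmf P"
    then show "restrict (\<lambda>i. V i \<omega>) (A \<union> B)
      = (\<lambda>i\<in>A \<union> B. if i \<in> B then restrict (\<lambda>i. V i \<omega>) B i else g (restrict (\<lambda>i. V i \<omega>) B) i)"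
      using g[symmetric] by (auto simp: fun_eq_iff restrict_def)
  qed
  then show "joint_ent P V (A \<union> B) \<le> joint_ent P V B"
    unfolding joint_ent_def by (rule ent_le_if_is_fun_of[OF fin])
  show "joint_ent P V B \<le> joint_ent P V (A \<union> B)" by (rule joint_ent_mono[OF fin]) auto
qed

locale polymatroid =
  fixes h :: "'i set \<Rightarrow> real"
  assumes submodular: "h (A \<union> B) + h (A \<inter> B) \<le> h A + h B"
    and mono: "A \<subseteq> B \<Longrightarrow> h A \<le> h B"
    and empty: "h {} = 0"
begin

lemma nonneg: "0 \<le> h A"
  using mono[of "{}" A] empty by simp

lemma marginal_antimono:
  assumes "B \<subseteq> A"
  shows "h (A \<union> E) - h A \<le> h (B \<union> E) - h B"
proof -
  have "h (A \<union> (B \<union> E)) + h (A \<inter> (B \<union> E)) \<le> h A + h (B \<union> E)" by (rule submodular)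
  moreover have "A \<union> (B \<union> E) = A \<union> E" using assms by auto
  moreover have "h B \<le> h (A \<inter> (B \<union> E))" by (rule mono) (use assms in auto)
  ultimately show ?thesis by simp
qed

lemma determined_Un:
  assumes "h (A \<union> B) = h A"
  shows "h (Z \<union> A \<union> B) = h (Z \<union> A)"
proof -
  have "h ((Z \<union> A) \<union> B) - h (Z \<union> A) \<le> h (A \<union> B) - h A" by (rule marginal_antimono) auto
  moreover have "h (Z \<union> A) \<le> h ((Z \<union> A) \<union> B)" by (rule mono) auto
  ultimately show ?thesis using assms by simp
qed

lemma marginal_le_sum_singletons:
  assumes "finite C" and "B \<subseteq> A"
  shows "h (A \<union> C) - h A \<le> (\<Sum>c\<in>C. h (B \<union> {c}) - h B)"
  using assms(1)
proof (induction C)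
  case (insert c C)
  have "h ((A \<union> C) \<union> {c}) - h (A \<union> C) \<le> h (B \<union> {c}) - h B"
    by (rule marginal_antimono) (use assms(2) in auto)
  moreover have "A \<union> insert c C = (A \<union> C) \<union> {c}" by auto
  ultimately show ?case using insert by simp
qed simp

lemma subadditive: "finite C \<Longrightarrow> h C \<le> (\<Sum>c\<in>C. h {c})"
  using marginal_le_sum_singletons[of C "{}" "{}"] by (simp add: empty)

lemma le_sum_marginals_image:
  assumes "finite C"
  shows "h (A \<union> f ` C) \<le> h A + (\<Sum>c\<in>C. h (A \<union> {f c}) - h A)"
proof -
  have "h (A \<union> f ` C) - h A \<le> (\<Sum>c\<in>f ` C. h (A \<union> {c}) - h A)"
    by (rule marginal_le_sum_singletons) (use assms in auto)
  also have "\<dots> \<le> (\<Sum>c\<in>C. h (A \<union> {f c}) - h A)"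
    using sum_image_le[OF assms, of "\<lambda>c. h (A \<union> {c}) - h A" f] mono[OF Un_upper1, of A "{c}" for c]
    by (simp add: comp_def)
  finally show ?thesis by simp
qed

lemma determined_Un_image:
  assumes "finite W" and "\<And>w. w \<in> W \<Longrightarrow> h ({a w} \<union> {b w}) = h {a w}" and "a ` W \<subseteq> A"
  shows "h (A \<union> b ` W) = h A"
  using assms
proof (induction W)
  case (insert w W)
  have "a w \<in> A" using insert.prems(2) by simp
  then have "A \<union> b ` insert w W = (A \<union> b ` W) \<union> {a w} \<union> {b w}" by auto
  also have "h \<dots> = h ((A \<union> b ` W) \<union> {a w})"
    by (rule determined_Un) (use insert in auto)
  also have "(A \<union> b ` W) \<union> {a w} = A \<union> b ` W" using \<open>a w \<in> A\<close> by auto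
  finally show ?case using insert by simp
qed simp

end

lemma polymatroid_joint_ent: "finite (set_pmf P) \<Longrightarrow> polymatroid (joint_ent P V)"
  by unfold_locales (auto intro: joint_ent_submodular joint_ent_mono joint_ent_empty)

section \<open>Cyclic windows and Han's inequality\<close>

lemma bij_betw_add_mod: "0 < (d::nat) \<Longrightarrow> bij_betw (\<lambda>a. (x + a) mod d) {..<d} {..<d}"
proof -
  assume d: "0 < d"
  have inj: "inj_on (\<lambda>a. (x + a) mod d) {..<d}"
    by (rule inj_onI) (metis cong_def cong_add_lcancel_nat lessThan_iff mod_less)
  moreover have "(\<lambda>a. (x + a) mod d) ` {..<d} = {..<d}"
    by (rule card_subset_eq) (use d inj in \<open>auto simp: card_image\<close>)
  ultimately show ?thesis by (simp add: bij_betw_def)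
qed

lemma sum_add_mod: "0 < (d::nat) \<Longrightarrow> (\<Sum>a<d. f ((x + a) mod d)) = (\<Sum>a<d. f a)"
  using sum.reindex_bij_betw[OF bij_betw_add_mod] by blast

definition cyclic_window :: "nat \<Rightarrow> nat \<Rightarrow> nat \<Rightarrow> nat set" where
  "cyclic_window d x t = (\<lambda>a. (x + a) mod d + 1) ` {..<t}"

lemma cyclic_window_0 [simp]: "cyclic_window d x 0 = {}"
  by (simp add: cyclic_window_def)

lemma cyclic_window_Suc: "cyclic_window d x (Suc t) = insert ((x + t) mod d + 1) (cyclic_window d x t)"
  by (auto simp: cyclic_window_def lessThan_Suc)

lemma finite_cyclic_window [simp]: "finite (cyclic_window d x t)"
  by (simp add: cyclic_window_def)

lemma cyclic_window_subset: "0 < d \<Longrightarrow> cyclic_window d x t \<subseteq> {1..d}"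
  by (auto simp: cyclic_window_def Suc_leI)

lemma inj_on_cyclic_window:
  fixes d :: nat
  assumes "t \<le> d"
  shows "inj_on (\<lambda>a. (x + a) mod d + 1) {..<t}"
proof (cases "d = 0")
  case False
  then have "inj_on (\<lambda>a. (x + a) mod d) {..<t}"
    using bij_betw_imp_inj_on[OF bij_betw_add_mod[of d x]] assms
    by (auto intro: inj_on_subset)
  then show ?thesis by (simp add: inj_on_def)
qed (use assms in simp)

lemma card_cyclic_window:
  assumes "t \<le> d"
  shows "card (cyclic_window d x t) = t"
  unfolding cyclic_window_def card_image[OF inj_on_cyclic_window[OF assms]] by simp

lemma cyclic_window_full: "0 < d \<Longrightarrow> cyclic_window d x d = {1..d}"
  by (intro card_subset_eq cyclic_window_subset) (auto simp: card_cyclic_window)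

lemma cyclic_window_shift_subset:
  "cyclic_window d ((x + 1) mod d) t \<subseteq> cyclic_window d x (Suc t)"
  unfolding cyclic_window_def
  by (auto simp: mod_add_left_eq intro!: image_eqI[where x = "Suc _"])

lemma sum_cyclic_windows:
  assumes "0 < d" and "t \<le> d"
  shows "(\<Sum>x<d. \<Sum>w\<in>cyclic_window d x t. G w) = real t * (\<Sum>w\<in>{1..d}. G w)"
proof -
  have "(\<Sum>x<d. \<Sum>w\<in>cyclic_window d x t. G w) = (\<Sum>x<d. \<Sum>a<t. G ((x + a) mod d + 1))"
    unfolding cyclic_window_def
    by (intro sum.cong refl sum.reindex_cong[OF inj_on_cyclic_window[OF assms(2)]]) auto
  also have "\<dots> = (\<Sum>a<t. \<Sum>x<d. G ((a + x) mod d + 1))"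
    by (subst sum.swap) (simp add: add.commute)
  also have "\<dots> = (\<Sum>a<t. \<Sum>w<d. G (w + 1))"
    using sum_add_mod[OF assms(1), of "\<lambda>w. G (w + 1)"] by simp
  also have "(\<Sum>w<d. G (w + 1)) = (\<Sum>w\<in>{1..d}. G w)"
    by (rule sum.reindex_bij_witness[of _ "\<lambda>w. w - 1" Suc]) auto
  finally show ?thesis by simp
qed

lemma bounded_antimono_le:
  fixes d :: nat
  assumes "\<And>u. Suc u < d \<Longrightarrow> a (Suc u) \<le> (a u :: 'a :: order)" and "u \<le> v" and "v < d"
  shows "a v \<le> a u"
  using assms(2,3) by (induction v rule: dec_induct) (auto intro: order_trans assms(1))

lemma antimono_prefix_average:
  assumes antimono: "\<And>u. Suc u < d \<Longrightarrow> (a (Suc u) :: real) \<le> a u" and t: "t \<le> d"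
  shows "real t * (\<Sum>u<d. a u) \<le> real d * (\<Sum>u<t. a u)"
proof (cases t)
  case (Suc t')
  have "real t * a t' \<le> (\<Sum>u<t. a u)"
    using sum_mono[of "{..<t}" "\<lambda>_. a t'" a] bounded_antimono_le[of d a, OF antimono] Suc t by auto
  moreover have "(\<Sum>u\<in>{t..<d}. a u) \<le> real (d - t) * a t'"
    using sum_mono[of "{t..<d}" a "\<lambda>_. a t'"] bounded_antimono_le[of d a, OF antimono] Suc by auto
  moreover have "(\<Sum>u<d. a u) = (\<Sum>u<t. a u) + (\<Sum>u\<in>{t..<d}. a u)"
    using t by (metis atLeast0LessThan sum.atLeastLessThan_concat zero_le)
  ultimately have "real t * (\<Sum>u<d. a u) \<le> real t * (\<Sum>u<t. a u) + real (d - t) * (real t * a t')"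
    by (simp add: distrib_left mult.left_commute mult_left_mono)
  also have "\<dots> \<le> real t * (\<Sum>u<t. a u) + real (d - t) * (\<Sum>u<t. a u)"
    using \<open>real t * a t' \<le> _\<close> by (intro add_left_mono mult_left_mono) auto
  finally show ?thesis using t by (simp add: of_nat_diff algebra_simps)
qed simp

context polymatroid
begin

text \<open>Han's inequality, restricted to the \<open>d\<close> cyclic windows of length \<open>t\<close>: the marginal
  gains of adding a window are nonincreasing in the window length, by submodularity and
  the rotation invariance of the family of windows.\<close>

lemma cyclic_window_average:
  assumes d: "0 < d" and t: "t \<le> d"
  shows "real t * (h (Z \<union> y ` {1..d}) - h Z) \<le> (\<Sum>x<d. h (Z \<union> y ` cyclic_window d x t) - h Z)"
proof -
  define G where "G x u = h (Z \<union> y ` cyclic_window d x u)" for x u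
  define a where "a u = (\<Sum>x<d. G x (Suc u) - G x u)" for u
  have telescope: "(\<Sum>u<t. a u) = (\<Sum>x<d. G x t - h Z)" for t
  proof (induction t)
    case (Suc t)
    then show ?case by (simp add: a_def flip: sum.distrib)
  qed (simp add: G_def)
  have "a (Suc u) \<le> a u" if "Suc u < d" for u
  proof -
    have "G x (Suc (Suc u)) - G x (Suc u) \<le> G ((x + 1) mod d) (Suc u) - G ((x + 1) mod d) u" for x
    proof -
      let ?new = "{y ((x + Suc u) mod d + 1)}"
      have "((x + 1) mod d + u) mod d = (x + Suc u) mod d"
        by (simp add: mod_add_left_eq)
      moreover have "h ((Z \<union> y ` cyclic_window d x (Suc u)) \<union> ?new) - h (Z \<union> y ` cyclic_window d x (Suc u))
        \<le> h ((Z \<union> y ` cyclic_window d ((x + 1) mod d) u) \<union> ?new) - h (Z \<union> y ` cyclic_window d ((x + 1) mod d) u)"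
        using cyclic_window_shift_subset[of d x u] by (intro marginal_antimono) auto
      ultimately show ?thesis by (simp add: G_def cyclic_window_Suc)
    qed
    then have "a (Suc u) \<le> (\<Sum>x<d. G ((1 + x) mod d) (Suc u) - G ((1 + x) mod d) u)"
      unfolding a_def by (intro sum_mono) (simp add: add.commute)
    also have "\<dots> = a u"
      unfolding a_def by (rule sum_add_mod[OF d])
    finally show ?thesis .
  qed
  then have "real t * (\<Sum>u<d. a u) \<le> real d * (\<Sum>u<t. a u)"
    by (rule antimono_prefix_average[OF _ t])
  moreover have "(\<Sum>u<d. a u) = real d * (h (Z \<union> y ` {1..d}) - h Z)"
    by (simp add: telescope G_def cyclic_window_full[OF d])
  ultimately show ?thesis
    using d by (simp add: telescope G_def mult.left_commute)
qed

lemma sum_marginal_cyclic_windows_le: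
  assumes d: "0 < d" and t: "t \<le> d"
    and y_det_v: "h ({v} \<union> y ` {1..d}) = h (y ` {1..d})"
    and v_det_y: "h ({v} \<union> y ` {1..d}) = h {v}"
    and x_det_y: "\<And>w. w \<in> {1..d} \<Longrightarrow> h ({x w} \<union> {y w}) = h {x w}"
  shows "(\<Sum>a<d. h (Z \<union> x ` cyclic_window d a t \<union> {v}) - h (Z \<union> x ` cyclic_window d a t))
    \<le> real (d - t) * (h (Z \<union> {v}) - h Z)"
proof -
  let ?Y = "y ` {1..d}"
  have v_eq_Y: "h (insert v Z') = h (Z' \<union> ?Y)" for Z'
  proof -
    have "h (Z' \<union> {v} \<union> ?Y) = h (Z' \<union> {v})" and "h (Z' \<union> ?Y \<union> {v}) = h (Z' \<union> ?Y)"
      using determined_Un[of "{v}" ?Y Z'] determined_Un[of ?Y "{v}" Z'] y_det_v v_det_y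
      by (simp_all add: Un_ac)
    then show ?thesis by (simp add: Un_ac)
  qed
  have "h (Z \<union> x ` cyclic_window d a t \<union> {v}) - h (Z \<union> x ` cyclic_window d a t)
      \<le> h (Z \<union> ?Y) - h (Z \<union> y ` cyclic_window d a t)" for a
  proof -
    let ?W = "cyclic_window d a t"
    let ?A = "Z \<union> x ` ?W"
    have W: "?W \<subseteq> {1..d}" by (rule cyclic_window_subset[OF d])
    have "h (?A \<union> y ` ?W) = h ?A" and "h ((?A \<union> {v}) \<union> y ` ?W) = h (?A \<union> {v})"
      by (rule determined_Un_image[where a = x]; use x_det_y W in auto)+
    moreover have "h ((?A \<union> y ` ?W) \<union> {v}) - h (?A \<union> y ` ?W)
        \<le> h ((Z \<union> y ` ?W) \<union> {v}) - h (Z \<union> y ` ?W)"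
      by (rule marginal_antimono) auto
    moreover have "y ` ?W \<union> ?Y = ?Y" using W by auto
    then have "h (insert v (Z \<union> y ` ?W)) = h (Z \<union> ?Y)"
      using v_eq_Y[of "Z \<union> y ` ?W"] by (simp add: Un_assoc)
    ultimately show ?thesis by (simp add: Un_ac)
  qed
  then have "(\<Sum>a<d. h (Z \<union> x ` cyclic_window d a t \<union> {v}) - h (Z \<union> x ` cyclic_window d a t))
      \<le> (\<Sum>a<d. h (Z \<union> ?Y) - h (Z \<union> y ` cyclic_window d a t))"
    by (rule sum_mono)
  also have "\<dots> = real d * (h (Z \<union> ?Y) - h Z) - (\<Sum>a<d. h (Z \<union> y ` cyclic_window d a t) - h Z)"
    by (simp add: sum_subtractf algebra_simps)
  also have "\<dots> \<le> real (d - t) * (h (Z \<union> ?Y) - h Z)"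
    using cyclic_window_average[OF d t, of Z y] t by (simp add: of_nat_diff algebra_simps)
  finally show ?thesis by (simp add: v_eq_Y)
qed

end

section \<open>Repair polymatroids\<close>

lemma sum_PiE_insert:
  assumes "a \<notin> A" "finite A" "finite (B a)"
  shows "(\<Sum>\<sigma>\<in>PiE (insert a A) B. f \<sigma>) = (\<Sum>\<sigma>\<in>PiE A B. \<Sum>x\<in>B a. (f (\<sigma>(a := x)) :: 'b::comm_monoid_add))"
proof -
  have "(\<Sum>\<sigma>\<in>PiE (insert a A) B. f \<sigma>) = (\<Sum>p\<in>B a \<times> PiE A B. f ((\<lambda>(y, g). g(a := y)) p))"
    unfolding PiE_insert_eq by (rule sum.reindex[OF inj_combinator[OF assms(1)], unfolded comp_def])
  also have "\<dots> = (\<Sum>x\<in>B a. \<Sum>\<sigma>\<in>PiE A B. f (\<sigma>(a := x)))"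
    by (simp add: sum.cartesian_product split_def)
  also have "\<dots> = (\<Sum>\<sigma>\<in>PiE A B. \<Sum>x\<in>B a. f (\<sigma>(a := x)))" by (rule sum.swap)
  finally show ?thesis .
qed

text \<open>An abstract repair system: \<open>h\<close> is the joint entropy of the node contents \<open>X i j\<close> and of the
  messages \<open>Y r l i j\<close> that node \<open>(i, j)\<close> sends to repair node \<open>(r, l)\<close>; the repair clusters
  are \<open>1..s\<close>, of size \<open>d\<close>, and \<open>S\<close> is the set of all nodes.\<close>

locale repair_polymatroid = polymatroid h for h :: "'i set \<Rightarrow> real" +
  fixes X :: "nat \<Rightarrow> nat \<Rightarrow> 'i" and Y :: "nat \<Rightarrow> nat \<Rightarrow> nat \<Rightarrow> nat \<Rightarrow> 'i"
    and d s :: nat and \<beta> :: real and S :: "(nat \<times> nat) set"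
  assumes d_pos: "0 < d" and two_le_s: "2 \<le> s"
    and messages_determine_node: "\<And>r l i. (r, l) \<in> S \<Longrightarrow> i \<in> {1..s} \<Longrightarrow> i \<noteq> r \<Longrightarrow>
      h ({X r l} \<union> Y r l i ` {1..d}) = h (Y r l i ` {1..d})"
    and node_determines_messages: "\<And>r l i. (r, l) \<in> S \<Longrightarrow> i \<in> {1..s} \<Longrightarrow> i \<noteq> r \<Longrightarrow>
      h ({X r l} \<union> Y r l i ` {1..d}) = h {X r l}"
    and sender_determines_message: "\<And>r l i j. (r, l) \<in> S \<Longrightarrow> i \<in> {1..s} \<Longrightarrow> i \<noteq> r \<Longrightarrow>
      j \<in> {1..d} \<Longrightarrow> h ({X i j} \<union> {Y r l i j}) = h {X i j}"
    and message_bound: "\<And>r l i j. (r, l) \<in> S \<Longrightarrow> i \<in> {1..s} \<Longrightarrow> i \<noteq> r \<Longrightarrow>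
      j \<in> {1..d} \<Longrightarrow> h {Y r l i j} \<le> \<beta>"
begin

lemma node_le:
  assumes rl: "(r, l) \<in> S"
  shows "h {X r l} \<le> real d * \<beta>"
proof -
  define i where "i = (if r = 1 then 2 else (1::nat))"
  have i: "i \<in> {1..s}" "i \<noteq> r" using two_le_s by (auto simp: i_def)
  have "h {X r l} \<le> h ({X r l} \<union> Y r l i ` {1..d})" by (rule mono) auto
  also have "\<dots> = h (Y r l i ` {1..d})" by (rule messages_determine_node[OF rl i])
  also have "\<dots> \<le> (\<Sum>c\<in>Y r l i ` {1..d}. h {c})" by (rule subadditive) simp
  also have "\<dots> \<le> (\<Sum>j\<in>{1..d}. h {Y r l i j})"
    using sum_image_le[of "{1..d}" "\<lambda>c. h {c}" "Y r l i"] nonneg by (simp add: comp_def)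
  also have "\<dots> \<le> (\<Sum>j\<in>{1..d}. \<beta>)" by (intro sum_mono message_bound[OF rl i]) auto
  finally show ?thesis by simp
qed

definition window_nodes :: "(nat \<Rightarrow> nat) \<Rightarrow> nat \<Rightarrow> (nat \<Rightarrow> nat) \<Rightarrow> 'i set" where
  "window_nodes t q \<sigma> = (\<Union>i\<in>{1..q}. X i ` cyclic_window d (\<sigma> i) (t i))"

lemma window_nodes_0 [simp]: "window_nodes t 0 \<sigma> = {}"
  by (simp add: window_nodes_def)

lemma window_nodes_upd: "j \<notin> {1..q} \<Longrightarrow> window_nodes t q (\<sigma>(j := x)) = window_nodes t q \<sigma>"
  unfolding window_nodes_def by (intro SUP_cong refl) auto

lemma window_nodes_Suc:
  "window_nodes t (Suc q) \<sigma> = window_nodes t q \<sigma> \<union> X (Suc q) ` cyclic_window d (\<sigma> (Suc q)) (t (Suc q))"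
  unfolding window_nodes_def by (simp add: atLeastAtMostSuc_conv Un_commute)

lemma sum_window_nodes_Suc:
  "(\<Sum>\<sigma>\<in>PiE {1..Suc q} (\<lambda>_. {..<d}). f (window_nodes t (Suc q) \<sigma>))
    = (\<Sum>\<sigma>\<in>PiE {1..q} (\<lambda>_. {..<d}). \<Sum>x<d.
        (f (window_nodes t q \<sigma> \<union> X (Suc q) ` cyclic_window d x (t (Suc q))) :: real))"
proof -
  have "{1..Suc q} = insert (Suc q) {1..q}" by auto
  then show ?thesis by (simp add: sum_PiE_insert window_nodes_Suc window_nodes_upd)
qed

text \<open>Every cluster \<open>i < r\<close> can repair node \<open>(r, l)\<close>, so each of them scales the averaged marginal
  information of \<open>X r l\<close> by \<open>(d - t i) / d\<close>.\<close>

lemma sum_marginal_window_nodes_le: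
  assumes rl: "(r, l) \<in> S" and "q < r" "q \<le> s" and t: "\<And>i. t i \<le> d"
  shows "(\<Sum>\<sigma>\<in>PiE {1..q} (\<lambda>_. {..<d}). h (window_nodes t q \<sigma> \<union> {X r l}) - h (window_nodes t q \<sigma>))
     \<le> (\<Prod>i\<in>{1..q}. real (d - t i)) * (real d * \<beta>)"
  using assms(2,3)
proof (induction q)
  case 0
  then show ?case using node_le[OF rl] by (simp add: empty)
next
  case (Suc q)
  have i: "Suc q \<in> {1..s}" "Suc q \<noteq> r" using Suc.prems by auto
  have "(\<Sum>\<sigma>\<in>PiE {1..Suc q} (\<lambda>_. {..<d}). h (window_nodes t (Suc q) \<sigma> \<union> {X r l}) - h (window_nodes t (Suc q) \<sigma>))
     \<le> (\<Sum>\<sigma>\<in>PiE {1..q} (\<lambda>_. {..<d}). real (d - t (Suc q)) * (h (window_nodes t q \<sigma> \<union> {X r l}) - h (window_nodes t q \<sigma>)))"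
    unfolding sum_window_nodes_Suc[of "\<lambda>K. h (K \<union> {X r l}) - h K"]
  proof (intro sum_mono sum_marginal_cyclic_windows_le[OF d_pos t])
    show "h ({X r l} \<union> Y r l (Suc q) ` {1..d}) = h (Y r l (Suc q) ` {1..d})"
      by (rule messages_determine_node[OF rl i])
    show "h ({X r l} \<union> Y r l (Suc q) ` {1..d}) = h {X r l}"
      by (rule node_determines_messages[OF rl i])
    show "h ({X (Suc q) w} \<union> {Y r l (Suc q) w}) = h {X (Suc q) w}" if "w \<in> {1..d}" for w
      using sender_determines_message[OF rl i that] .
  qed
  also have "\<dots> \<le> real (d - t (Suc q)) * ((\<Prod>i\<in>{1..q}. real (d - t i)) * (real d * \<beta>))"
    using Suc by (simp add: sum_distrib_left[symmetric] mult_left_mono)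
  also have "\<dots> = (\<Prod>i\<in>{1..Suc q}. real (d - t i)) * (real d * \<beta>)"
    by (simp add: atLeastAtMostSuc_conv mult_ac)
  finally show ?case .
qed

lemma sum_window_nodes_le:
  assumes "q \<le> s" and t: "\<And>i. t i \<le> d" and S: "\<And>i j. i \<in> {1..s} \<Longrightarrow> j \<in> {1..d} \<Longrightarrow> (i, j) \<in> S"
  shows "(\<Sum>\<sigma>\<in>PiE {1..q} (\<lambda>_. {..<d}). h (window_nodes t q \<sigma>))
     \<le> \<beta> * real d ^ 2 * (real d ^ q - (\<Prod>i\<in>{1..q}. real (d - t i)))"
  using assms(1)
proof (induction q)
  case (Suc q)
  let ?P = "\<Prod>i\<in>{1..q}. real (d - t i)"
  define G where "G \<sigma> w = h (window_nodes t q \<sigma> \<union> {X (Suc q) w}) - h (window_nodes t q \<sigma>)" for \<sigma> w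
  have "(\<Sum>\<sigma>\<in>PiE {1..Suc q} (\<lambda>_. {..<d}). h (window_nodes t (Suc q) \<sigma>))
     \<le> (\<Sum>\<sigma>\<in>PiE {1..q} (\<lambda>_. {..<d}). \<Sum>x<d. h (window_nodes t q \<sigma>) + (\<Sum>w\<in>cyclic_window d x (t (Suc q)). G \<sigma> w))"
    unfolding sum_window_nodes_Suc[of h] G_def by (intro sum_mono le_sum_marginals_image) simp
  also have "\<dots> = real d * (\<Sum>\<sigma>\<in>PiE {1..q} (\<lambda>_. {..<d}). h (window_nodes t q \<sigma>))
      + real (t (Suc q)) * (\<Sum>w\<in>{1..d}. \<Sum>\<sigma>\<in>PiE {1..q} (\<lambda>_. {..<d}). G \<sigma> w)"
    by (simp add: sum.distrib sum_cyclic_windows[OF d_pos t] sum_distrib_left) (rule sum.swap)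
  also have "\<dots> \<le> real d * (\<beta> * real d ^ 2 * (real d ^ q - ?P)) + real (t (Suc q)) * (\<Sum>w\<in>{1..d}. ?P * (real d * \<beta>))"
  proof (intro add_mono mult_left_mono sum_mono)
    fix w assume "w \<in> {1..d}"
    then have "(Suc q, w) \<in> S" by (intro S) (use Suc.prems in auto)
    then show "(\<Sum>\<sigma>\<in>PiE {1..q} (\<lambda>_. {..<d}). G \<sigma> w) \<le> ?P * (real d * \<beta>)"
      unfolding G_def by (rule sum_marginal_window_nodes_le) (use Suc.prems t in auto)
  qed (use Suc in auto)
  also have "\<dots> = \<beta> * real d ^ 2 * (real d ^ Suc q - (\<Prod>i\<in>{1..Suc q}. real (d - t i)))"
    using t[of "Suc q"] by (simp add: atLeastAtMostSuc_conv of_nat_diff power2_eq_square algebra_simps)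
  finally show ?case .
qed (simp add: empty)

lemma sum_window_nodes_last_le:
  assumes t: "\<And>i. t i \<le> d" and S: "\<And>i j. i \<in> {1..s} \<Longrightarrow> j \<in> {1..d} \<Longrightarrow> (i, j) \<in> S"
    and S_last: "\<And>l. l \<in> {1..t (Suc s)} \<Longrightarrow> (Suc s, l) \<in> S"
  shows "(\<Sum>\<sigma>\<in>PiE {1..s} (\<lambda>_. {..<d}). h (window_nodes t s \<sigma> \<union> X (Suc s) ` {1..t (Suc s)}))
     \<le> real d * \<beta> * (real d ^ Suc s - (\<Prod>i\<in>{1..Suc s}. real (d - t i)))"
proof -
  let ?P = "\<Prod>i\<in>{1..s}. real (d - t i)"
  define G where "G \<sigma> l = h (window_nodes t s \<sigma> \<union> {X (Suc s) l}) - h (window_nodes t s \<sigma>)" for \<sigma> l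
  have "(\<Sum>\<sigma>\<in>PiE {1..s} (\<lambda>_. {..<d}). h (window_nodes t s \<sigma> \<union> X (Suc s) ` {1..t (Suc s)}))
    \<le> (\<Sum>\<sigma>\<in>PiE {1..s} (\<lambda>_. {..<d}). h (window_nodes t s \<sigma>) + (\<Sum>l\<in>{1..t (Suc s)}. G \<sigma> l))"
    unfolding G_def by (intro sum_mono le_sum_marginals_image) simp
  also have "\<dots> = (\<Sum>\<sigma>\<in>PiE {1..s} (\<lambda>_. {..<d}). h (window_nodes t s \<sigma>))
      + (\<Sum>l\<in>{1..t (Suc s)}. \<Sum>\<sigma>\<in>PiE {1..s} (\<lambda>_. {..<d}). G \<sigma> l)"
    by (simp add: sum.distrib sum.swap[of G])
  also have "\<dots> \<le> \<beta> * real d ^ 2 * (real d ^ s - ?P) + (\<Sum>l\<in>{1..t (Suc s)}. ?P * (real d * \<beta>))"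
  proof (intro add_mono sum_mono)
    show "(\<Sum>\<sigma>\<in>PiE {1..s} (\<lambda>_. {..<d}). h (window_nodes t s \<sigma>)) \<le> \<beta> * real d ^ 2 * (real d ^ s - ?P)"
      by (rule sum_window_nodes_le[OF _ t S]) auto
    fix l assume "l \<in> {1..t (Suc s)}"
    then show "(\<Sum>\<sigma>\<in>PiE {1..s} (\<lambda>_. {..<d}). G \<sigma> l) \<le> ?P * (real d * \<beta>)"
      unfolding G_def by (intro sum_marginal_window_nodes_le S_last t) auto
  qed
  also have "\<dots> = real d * \<beta> * (real d ^ Suc s - (\<Prod>i\<in>{1..Suc s}. real (d - t i)))"
    using t[of "Suc s"] by (simp add: atLeastAtMostSuc_conv of_nat_diff power2_eq_square algebra_simps)
  finally show ?thesis .
qed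

end

section \<open>The lower bound\<close>

definition cc_admissible :: "nat \<Rightarrow> nat \<Rightarrow> nat \<Rightarrow> (nat \<Rightarrow> nat) \<Rightarrow> bool" where
  "cc_admissible n k s ki \<longleftrightarrow> ki \<in> {1..s+1} \<rightarrow>\<^sub>E UNIV \<and> (\<Sum>i\<in>{1..s+1}. ki i) = k \<and> ki (s+1) \<le> fcrs_s0 n s"

text \<open>The number of index strings \<open>b\<close> hitting at least one of \<open>ki i\<close> chosen servers in each cluster \<open>i\<close>.\<close>

definition cc_count :: "nat \<Rightarrow> nat \<Rightarrow> (nat \<Rightarrow> nat) \<Rightarrow> int" where
  "cc_count n s ki = int (fcrs_d n s) ^ (s+1) - (\<Prod>i\<in>{1..s+1}. int (fcrs_d n s) - int (ki i))"

lemma cc_m_eq_Min: "cc_m n k s = Min (cc_count n s ` Collect (cc_admissible n k s))"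
  unfolding cc_m_def cc_count_def cc_admissible_def by (rule arg_cong[where f = Min]) blast

lemma cc_admissible_le:
  "cc_admissible n k s ki \<Longrightarrow> i \<in> {1..s+1} \<Longrightarrow> ki i \<le> k"
  unfolding cc_admissible_def using member_le_sum[of i "{1..s+1}" ki] by auto

lemma finite_cc_admissible: "finite (Collect (cc_admissible n k s))"
proof (rule finite_subset)
  show "Collect (cc_admissible n k s) \<subseteq> {1..s+1} \<rightarrow>\<^sub>E {0..k}"
  proof
    fix ki assume "ki \<in> Collect (cc_admissible n k s)"
    then show "ki \<in> {1..s+1} \<rightarrow>\<^sub>E {0..k}"
      using cc_admissible_le[of n k s ki] unfolding cc_admissible_def PiE_iff by auto
  qed
qed (simp add: finite_PiE)

lemma cc_admissible_exists: "0 < s \<Longrightarrow> cc_admissible n k s (\<lambda>i\<in>{1..s+1}. if i = 1 then k else 0)"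
  by (simp add: cc_admissible_def sum.If_cases)

lemma cc_m_attained:
  assumes "0 < s"
  obtains ki where "cc_admissible n k s ki" and "cc_m n k s = cc_count n s ki"
proof -
  have "cc_m n k s \<in> cc_count n s ` Collect (cc_admissible n k s)"
    unfolding cc_m_eq_Min using cc_admissible_exists[OF assms, of n k]
    by (intro Min_in finite_imageI finite_cc_admissible) blast
  then show ?thesis using that by blast
qed

lemma cc_m_le: "cc_admissible n k s ki \<Longrightarrow> cc_m n k s \<le> cc_count n s ki"
  unfolding cc_m_eq_Min by (rule Min_le) (auto intro: finite_cc_admissible)

lemma k_le_fcrs_d:
  assumes "0 < k" "s \<le> n div k" "0 < s"
  shows "k \<le> fcrs_d n s"
proof -
  have "s * k \<le> n" using assms(2) less_eq_div_iff_mult_less_eq[OF assms(1)] by simp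
  then have "k * s \<le> n" by (simp add: mult.commute)
  then show ?thesis unfolding fcrs_d_def using assms(3) by (simp add: less_eq_div_iff_mult_less_eq)
qed

lemma cc_count_bounds:
  assumes "cc_admissible n k s ki" "0 < k" "k \<le> fcrs_d n s"
  shows "0 < cc_count n s ki" "cc_count n s ki \<le> int (fcrs_d n s) ^ (s+1)"
proof -
  let ?d = "int (fcrs_d n s)"
  have le: "ki i \<le> fcrs_d n s" if "i \<in> {1..s+1}" for i
    using cc_admissible_le[OF assms(1) that] assms(3) by simp
  have "0 \<le> (\<Prod>i\<in>{1..s+1}. ?d - int (ki i))"
    using le by (intro prod_nonneg) auto
  then show "cc_count n s ki \<le> ?d ^ (s+1)"
    by (simp add: cc_count_def)
  have "(\<Sum>i\<in>{1..s+1}. ki i) \<noteq> 0" using assms(1,2) by (simp add: cc_admissible_def)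
  then obtain i0 where i0: "i0 \<in> {1..s+1}" "ki i0 \<noteq> 0" by (meson sum.neutral)
  have "(\<Prod>i\<in>{1..s+1}. ?d - int (ki i)) = (?d - int (ki i0)) * (\<Prod>i\<in>{1..s+1} - {i0}. ?d - int (ki i))"
    by (rule prod.remove) (use i0 in auto)
  also have "\<dots> \<le> (?d - 1) * ?d ^ s"
  proof (rule mult_mono)
    show "(\<Prod>i\<in>{1..s+1} - {i0}. ?d - int (ki i)) \<le> ?d ^ s"
      by (rule prod_le_power) (use le i0 assms(2,3) in auto)
    show "0 \<le> (\<Prod>i\<in>{1..s+1} - {i0}. ?d - int (ki i))"
      by (rule prod_nonneg) (use le in auto)
  qed (use i0 assms(2,3) in auto)
  also have "\<dots> < ?d ^ (s+1)" using assms(2,3) by (simp add: algebra_simps)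
  finally show "0 < cc_count n s ki" by (simp add: cc_count_def)
qed

lemma cc_m_pos_le:
  assumes "0 < k" "s \<le> n div k" "0 < s"
  shows "0 < cc_m n k s" and "cc_m n k s \<le> int (fcrs_d n s) ^ (s+1)"
proof -
  obtain ki where "cc_admissible n k s ki" and "cc_m n k s = cc_count n s ki"
    by (rule cc_m_attained[OF assms(3)])
  then show "0 < cc_m n k s" and "cc_m n k s \<le> int (fcrs_d n s) ^ (s+1)"
    using cc_count_bounds[OF _ assms(1) k_le_fcrs_d[OF assms]] by simp_all
qed

lemma fcrs_rbtD:
  assumes "fcrs_rbt n k s P X Y \<alpha> \<beta>"
  shows fcrs_rbt_finite: "finite (set_pmf P)"
    and fcrs_rbt_recovery: "\<And>K. K \<subseteq> servers n s \<Longrightarrow> card K = k \<Longrightarrow> is_fun_of P id (\<lambda>f. \<lambda>v\<in>K. X v f)"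
    and fcrs_rbt_repair: "\<And>r l i. (r, l) \<in> servers n s \<Longrightarrow> i \<in> {1..s} \<Longrightarrow> i \<noteq> r \<Longrightarrow>
      (\<forall>j\<in>{1..fcrs_d n s}. is_fun_of P (Y r l i j) (X (i, j)) \<and> ent P (Y r l i j) \<le> \<beta>)
      \<and> is_fun_of P (X (r, l)) (\<lambda>f. \<lambda>j\<in>{1..fcrs_d n s}. Y r l i j f)
      \<and> cond_ent P (\<lambda>f. \<lambda>j\<in>{1..fcrs_d n s}. Y r l i j f) (X (r, l)) = 0"
proof -
  note F = assms[unfolded fcrs_rbt_def fcrs_def]
  show "finite (set_pmf P)" using F by (elim conjE)
  show "\<And>K. K \<subseteq> servers n s \<Longrightarrow> card K = k \<Longrightarrow> is_fun_of P id (\<lambda>f. \<lambda>v\<in>K. X v f)"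
    using F by (elim conjE) blast
  fix r l i assume "(r, l) \<in> servers n s" "i \<in> {1..s}" "i \<noteq> r"
  with F show "(\<forall>j\<in>{1..fcrs_d n s}. is_fun_of P (Y r l i j) (X (i, j)) \<and> ent P (Y r l i j) \<le> \<beta>)
      \<and> is_fun_of P (X (r, l)) (\<lambda>f. \<lambda>j\<in>{1..fcrs_d n s}. Y r l i j f)
      \<and> cond_ent P (\<lambda>f. \<lambda>j\<in>{1..fcrs_d n s}. Y r l i j f) (X (r, l)) = 0"
    by (elim conjE) (drule bspec, assumption, drule bspec, assumption, simp)+
qed

definition fcrs_vars :: "(nat \<times> nat \<Rightarrow> 'f \<Rightarrow> 'a) \<Rightarrow> (nat \<Rightarrow> nat \<Rightarrow> nat \<Rightarrow> nat \<Rightarrow> 'f \<Rightarrow> 'b)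
    \<Rightarrow> (nat \<times> nat) + (nat \<times> nat \<times> nat \<times> nat) \<Rightarrow> 'f \<Rightarrow> 'a + 'b" where
  "fcrs_vars X Y v \<omega> = (case v of Inl v \<Rightarrow> Inl (X v \<omega>) | Inr (r, l, i, j) \<Rightarrow> Inr (Y r l i j \<omega>))"

lemma fcrs_vars_simps [simp]:
  "fcrs_vars X Y (Inl v) = (\<lambda>\<omega>. Inl (X v \<omega>))"
  "fcrs_vars X Y (Inr (r, l, i, j)) = (\<lambda>\<omega>. Inr (Y r l i j \<omega>))"
  by (simp_all add: fcrs_vars_def fun_eq_iff)

lemma joint_ent_fcrs_vars_Inl_image:
  "finite (set_pmf P) \<Longrightarrow> joint_ent P (fcrs_vars X Y) (Inl ` K) = ent P (\<lambda>\<omega>. \<lambda>v\<in>K. X v \<omega>)"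
  unfolding joint_ent_def by (rule ent_cong_level_sets) (auto simp: restrict_eq_restrict_iff)

lemma joint_ent_fcrs_vars_singleton:
  assumes "finite (set_pmf P)"
  shows "joint_ent P (fcrs_vars X Y) {Inl v} = ent P (X v)"
    and "joint_ent P (fcrs_vars X Y) {Inr (r, l, i, j)} = ent P (Y r l i j)"
  by (simp_all add: joint_ent_singleton ent_comp_inj assms)

lemma joint_ent_fcrs_vars_node_determined:
  assumes fin: "finite (set_pmf P)" and "is_fun_of P (X v) (\<lambda>\<omega>. \<lambda>j\<in>J. Y r l i j \<omega>)"
  shows "joint_ent P (fcrs_vars X Y) ({Inl v} \<union> (\<lambda>j. Inr (r, l, i, j)) ` J)
    = joint_ent P (fcrs_vars X Y) ((\<lambda>j. Inr (r, l, i, j)) ` J)"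
proof (rule joint_ent_Un_if_is_fun_of[OF fin])
  obtain g where g: "\<And>\<omega>. \<omega> \<in> set_pmf P \<Longrightarrow> X v \<omega> = g (\<lambda>j\<in>J. Y r l i j \<omega>)"
    using assms(2) unfolding is_fun_of_def by blast
  show "is_fun_of P (\<lambda>\<omega>. restrict (\<lambda>u. fcrs_vars X Y u \<omega>) {Inl v})
      (\<lambda>\<omega>. restrict (\<lambda>u. fcrs_vars X Y u \<omega>) ((\<lambda>j. Inr (r, l, i, j)) ` J))"
    unfolding is_fun_of_def
    by (intro exI[of _ "\<lambda>F. \<lambda>u\<in>{Inl v}. Inl (g (\<lambda>j\<in>J. projr (F (Inr (r, l, i, j)))))"] ballI)
      (auto simp: fun_eq_iff g cong: restrict_cong)
qed

lemma joint_ent_fcrs_vars_messages_determined: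
  assumes fin: "finite (set_pmf P)" and "cond_ent P (\<lambda>\<omega>. \<lambda>j\<in>J. Y r l i j \<omega>) (X v) = 0"
  shows "joint_ent P (fcrs_vars X Y) ({Inl v} \<union> (\<lambda>j. Inr (r, l, i, j)) ` J)
    = joint_ent P (fcrs_vars X Y) {Inl v}"
proof -
  have "joint_ent P (fcrs_vars X Y) ({Inl v} \<union> (\<lambda>j. Inr (r, l, i, j)) ` J)
      = ent P (\<lambda>\<omega>. (X v \<omega>, \<lambda>j\<in>J. Y r l i j \<omega>))"
    unfolding joint_ent_def by (rule ent_cong_level_sets[OF fin]) (auto simp: restrict_eq_restrict_iff)
  also have "\<dots> = ent P (X v)" using assms(2) by (simp add: cond_ent_def)
  finally show ?thesis by (simp add: joint_ent_fcrs_vars_singleton[OF fin])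
qed

lemma joint_ent_fcrs_vars_message_determined:
  assumes fin: "finite (set_pmf P)" and "is_fun_of P (Y r l i j) (X w)"
  shows "joint_ent P (fcrs_vars X Y) ({Inl w} \<union> {Inr (r, l, i, j)}) = joint_ent P (fcrs_vars X Y) {Inl w}"
proof -
  obtain g where g: "\<And>\<omega>. \<omega> \<in> set_pmf P \<Longrightarrow> Y r l i j \<omega> = g (X w \<omega>)"
    using assms(2) unfolding is_fun_of_def by blast
  have "joint_ent P (fcrs_vars X Y) ({Inr (r, l, i, j)} \<union> {Inl w}) = joint_ent P (fcrs_vars X Y) {Inl w}"
    by (rule joint_ent_Un_if_is_fun_of[OF fin], unfold is_fun_of_def)
      (intro exI[of _ "\<lambda>F. \<lambda>u\<in>{Inr (r, l, i, j)}. Inr (g (projl (F (Inl w))))"] ballI,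
       auto simp: fun_eq_iff g)
  then show ?thesis by (simp add: Un_commute)
qed

lemma fcrs_repair_polymatroid:
  fixes X :: "nat \<times> nat \<Rightarrow> 'f \<Rightarrow> 'a" and Y :: "nat \<Rightarrow> nat \<Rightarrow> nat \<Rightarrow> nat \<Rightarrow> 'f \<Rightarrow> 'b"
  assumes F: "fcrs_rbt n k s P X Y \<alpha> \<beta>" and "2 \<le> s" and "0 < fcrs_d n s"
  shows "repair_polymatroid (joint_ent P (fcrs_vars X Y)) (\<lambda>i j. Inl (i, j)) (\<lambda>r l i j. Inr (r, l, i, j))
    (fcrs_d n s) s \<beta> (servers n s)"
proof -
  note fin = fcrs_rbt_finite[OF F] and repair = fcrs_rbt_repair[OF F]
  interpret polymatroid "joint_ent P (fcrs_vars X Y)" by (rule polymatroid_joint_ent[OF fin])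
  show ?thesis
  proof unfold_locales
    fix r l i assume rl: "(r, l) \<in> servers n s" and i: "i \<in> {1..s}" "i \<noteq> r"
    show "joint_ent P (fcrs_vars X Y) ({Inl (r, l)} \<union> (\<lambda>j. Inr (r, l, i, j)) ` {1..fcrs_d n s})
        = joint_ent P (fcrs_vars X Y) ((\<lambda>j. Inr (r, l, i, j)) ` {1..fcrs_d n s})"
      using repair[OF rl i] by (intro joint_ent_fcrs_vars_node_determined[OF fin]) blast
    show "joint_ent P (fcrs_vars X Y) ({Inl (r, l)} \<union> (\<lambda>j. Inr (r, l, i, j)) ` {1..fcrs_d n s})
        = joint_ent P (fcrs_vars X Y) {Inl (r, l)}"
      using repair[OF rl i] by (intro joint_ent_fcrs_vars_messages_determined[OF fin]) blast
    fix j assume j: "j \<in> {1..fcrs_d n s}"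
    show "joint_ent P (fcrs_vars X Y) ({Inl (i, j)} \<union> {Inr (r, l, i, j)})
        = joint_ent P (fcrs_vars X Y) {Inl (i, j)}"
      using repair[OF rl i] j by (intro joint_ent_fcrs_vars_message_determined[OF fin]) blast
    show "joint_ent P (fcrs_vars X Y) {Inr (r, l, i, j)} \<le> \<beta>"
      using repair[OF rl i] j by (simp add: joint_ent_fcrs_vars_singleton[OF fin])
  qed (use assms in auto)
qed

definition window_servers :: "nat \<Rightarrow> nat \<Rightarrow> (nat \<Rightarrow> nat) \<Rightarrow> (nat \<Rightarrow> nat) \<Rightarrow> (nat \<times> nat) set" where
  "window_servers d s t \<sigma> =
    (\<Union>i\<in>{1..s}. Pair i ` cyclic_window d (\<sigma> i) (t i)) \<union> Pair (s + 1) ` {1..t (s + 1)}"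

lemma card_window_servers:
  assumes "\<And>i. t i \<le> d"
  shows "card (window_servers d s t \<sigma>) = (\<Sum>i\<in>{1..s+1}. t i)"
proof -
  have "card (\<Union>i\<in>{1..s}. Pair i ` cyclic_window d (\<sigma> i) (t i)) = (\<Sum>i\<in>{1..s}. t i)"
    by (subst card_UN_disjoint) (auto simp: card_image inj_on_def card_cyclic_window assms)
  then show ?thesis
    unfolding window_servers_def by (subst card_Un_disjoint) (auto simp: card_image inj_on_def)
qed

lemma window_servers_subset:
  assumes "t (s + 1) \<le> fcrs_s0 n s" and "0 < fcrs_d n s"
  shows "window_servers (fcrs_d n s) s t \<sigma> \<subseteq> servers n s"
  using cyclic_window_subset[OF assms(2)] assms(1)
  unfolding window_servers_def servers_def by fastforce

lemma of_int_cc_count: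
  assumes "\<And>i. i \<in> {1..s+1} \<Longrightarrow> ki i \<le> fcrs_d n s"
  shows "real_of_int (cc_count n s ki) = real (fcrs_d n s) ^ (s+1) - (\<Prod>i\<in>{1..s+1}. real (fcrs_d n s - ki i))"
proof -
  have "(\<Prod>i\<in>{1..s+1}. real (fcrs_d n s - ki i)) = (\<Prod>i\<in>{1..s+1}. real_of_int (int (fcrs_d n s) - int (ki i)))"
    using assms by (intro prod.cong) (simp_all add: of_nat_diff)
  then show ?thesis by (simp add: cc_count_def of_int_prod)
qed

lemma ent_le_joint_ent_window_servers:
  assumes F: "fcrs_rbt n k s P X Y \<alpha> \<beta>" and "0 < fcrs_d n s" and t: "\<And>i. t i \<le> fcrs_d n s"
    and "(\<Sum>i\<in>{1..s+1}. t i) = k" and "t (s + 1) \<le> fcrs_s0 n s"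
  shows "ent P id \<le> joint_ent P (fcrs_vars X Y) (Inl ` window_servers (fcrs_d n s) s t \<sigma>)"
proof -
  have "card (window_servers (fcrs_d n s) s t \<sigma>) = k"
    and "window_servers (fcrs_d n s) s t \<sigma> \<subseteq> servers n s"
    using card_window_servers[OF t] window_servers_subset[of t s n] assms(2,4,5) by simp_all
  then have "ent P id \<le> ent P (\<lambda>f. \<lambda>v\<in>window_servers (fcrs_d n s) s t \<sigma>. X v f)"
    by (intro ent_le_if_is_fun_of[OF fcrs_rbt_finite[OF F]] fcrs_rbt_recovery[OF F])
  then show ?thesis
    by (simp add: joint_ent_fcrs_vars_Inl_image[OF fcrs_rbt_finite[OF F]])
qed

text \<open>Averaging over all \<open>d ^ s\<close> choices of windows of lengths given by an optimal \<open>ki\<close>: each choice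
  yields \<open>k\<close> servers that determine the file.\<close>

lemma fcrs_rbt_bandwidth_ge:
  fixes P :: "'f pmf" and X :: "nat \<times> nat \<Rightarrow> 'f \<Rightarrow> 'a" and Y :: "nat \<Rightarrow> nat \<Rightarrow> nat \<Rightarrow> nat \<Rightarrow> 'f \<Rightarrow> 'b"
  assumes "0 < k" and "2 \<le> s" and "s \<le> n div k" and F: "fcrs_rbt n k s P X Y \<alpha> \<beta>"
  shows "gamma_cc n k s (ent P id) \<le> real (fcrs_d n s) * \<beta>"
proof -
  define d where "d = fcrs_d n s"
  let ?K = "\<lambda>t \<sigma>. Inl ` window_servers d s t \<sigma>"
  have kd: "k \<le> d" and m_pos: "0 < cc_m n k s"
    using k_le_fcrs_d cc_m_pos_le(1) assms(1-3) by (auto simp: d_def)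
  obtain ki where ki: "cc_admissible n k s ki" and m: "cc_m n k s = cc_count n s ki"
    using cc_m_attained assms(2) by (metis zero_less_numeral less_le_trans)
  define t where "t i = (if i \<in> {1..s+1} then ki i else 0)" for i
  have t: "t i \<le> d" for i using cc_admissible_le[OF ki, of i] kd by (auto simp: t_def)
  have t_sum: "(\<Sum>i\<in>{1..s+1}. t i) = k" and t_last: "t (s + 1) \<le> fcrs_s0 n s"
    using ki by (simp_all add: t_def cc_admissible_def)
  interpret repair_polymatroid "joint_ent P (fcrs_vars X Y)" "\<lambda>i j. Inl (i, j)"
      "\<lambda>r l i j. Inr (r, l, i, j)" d s \<beta> "servers n s"
    unfolding d_def by (rule fcrs_repair_polymatroid[OF F \<open>2 \<le> s\<close>]) (use kd assms(1) d_def in simp)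
  have "real d ^ s * ent P id = (\<Sum>\<sigma>\<in>PiE {1..s} (\<lambda>_. {..<d}). ent P id)"
    by (simp add: card_PiE)
  also have "\<dots> \<le> (\<Sum>\<sigma>\<in>PiE {1..s} (\<lambda>_. {..<d}). joint_ent P (fcrs_vars X Y) (?K t \<sigma>))"
    using ent_le_joint_ent_window_servers[OF F _ _ t_sum t_last] t kd assms(1)
    by (intro sum_mono) (simp add: d_def)
  also have "\<dots> = (\<Sum>\<sigma>\<in>PiE {1..s} (\<lambda>_. {..<d}).
      joint_ent P (fcrs_vars X Y) (window_nodes t s \<sigma> \<union> (\<lambda>l. Inl (Suc s, l)) ` {1..t (Suc s)}))"
    by (intro sum.cong refl arg_cong[where f = "joint_ent P (fcrs_vars X Y)"])
      (auto simp: window_servers_def window_nodes_def)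
  also have "\<dots> \<le> real d * \<beta> * (real d ^ Suc s - (\<Prod>i\<in>{1..Suc s}. real (d - t i)))"
  proof (rule sum_window_nodes_last_le[OF t])
    show "(i, j) \<in> servers n s" if "i \<in> {1..s}" "j \<in> {1..d}" for i j
      using that by (simp add: servers_def d_def)
    show "(Suc s, l) \<in> servers n s" if "l \<in> {1..t (Suc s)}" for l
      using that t_last by (simp add: servers_def)
  qed
  also have "(\<Prod>i\<in>{1..Suc s}. real (d - t i)) = (\<Prod>i\<in>{1..s+1}. real (d - ki i))"
    by (rule prod.cong) (simp_all add: t_def)
  also have "real d ^ Suc s - \<dots> = real_of_int (cc_m n k s)"
  proof -
    have "ki i \<le> fcrs_d n s" if "i \<in> {1..s+1}" for i
      using cc_admissible_le[OF ki that] kd by (simp add: d_def)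
    from of_int_cc_count[OF this] show ?thesis by (simp add: m d_def)
  qed
  finally show ?thesis
    using m_pos by (simp add: gamma_cc_def d_def pos_divide_le_eq mult.commute id_def)
qed

section \<open>The Cubic Code\<close>

lemma card_PiE_fixed:
  assumes "finite I" and "J \<subseteq> I" and "\<And>i. i \<in> J \<Longrightarrow> c i \<in> D" and "finite D"
  shows "card {b \<in> PiE I (\<lambda>_. D). \<forall>i\<in>J. b i = c i} = card D ^ (card I - card J)"
proof -
  have "{b \<in> PiE I (\<lambda>_. D). \<forall>i\<in>J. b i = c i} = PiE I (\<lambda>i. if i \<in> J then {c i} else D)"
    using assms(2,3) by (auto simp: PiE_iff extensional_def split: if_splits)
  then have "card {b \<in> PiE I (\<lambda>_. D). \<forall>i\<in>J. b i = c i} = (\<Prod>i\<in>I. card (if i \<in> J then {c i} else D))"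
    using assms(1) by (simp add: card_PiE)
  also have "\<dots> = (\<Prod>i\<in>I. if i \<in> J then 1 else card D)"
    by (intro prod.cong) auto
  also have "\<dots> = card D ^ card (I - J)"
    using assms(1) by (simp add: prod.If_cases Diff_eq)
  also have "card (I - J) = card I - card J"
    using assms(1,2) by (simp add: card_Diff_subset finite_subset)
  finally show ?thesis .
qed

lemma finite_cc_strings: "finite (cc_strings n s)"
  by (simp add: cc_strings_def finite_PiE)

lemma card_cc_strings: "card (cc_strings n s) = fcrs_d n s ^ (s+1)"
  by (simp add: cc_strings_def card_PiE)

lemma card_cc_strings_fixed1:
  assumes "i \<in> {1..s+1}" "j \<in> {1..fcrs_d n s}"
  shows "card {b \<in> cc_strings n s. b i = j} = fcrs_d n s ^ s"
  using card_PiE_fixed[of "{1..s+1}" "{i}" "\<lambda>_. j" "{1..fcrs_d n s}"] assms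
  by (simp add: cc_strings_def)

lemma card_cc_strings_fixed2:
  assumes "i \<in> {1..s+1}" "r \<in> {1..s+1}" "i \<noteq> r" "j \<in> {1..fcrs_d n s}" "l \<in> {1..fcrs_d n s}"
  shows "card {b \<in> cc_strings n s. b i = j \<and> b r = l} = fcrs_d n s ^ (s - 1)"
proof -
  have "{b \<in> cc_strings n s. b i = j \<and> b r = l}
      = {b \<in> PiE {1..s+1} (\<lambda>_. {1..fcrs_d n s}). \<forall>i'\<in>{i, r}. b i' = (if i' = i then j else l)}"
    using assms(3) by (auto simp: cc_strings_def)
  then show ?thesis
    using card_PiE_fixed[of "{1..s+1}" "{i, r}" "\<lambda>i'. if i' = i then j else l" "{1..fcrs_d n s}"] assms
    by simp
qed

lemma ent_restrict_le:
  assumes "finite (set_pmf P)" and "finite A" and "\<And>b. b \<in> A \<Longrightarrow> ent P (\<lambda>\<omega>. enc \<omega> b) \<le> c"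
  shows "ent P (\<lambda>\<omega>. \<lambda>b\<in>A. enc \<omega> b) \<le> real (card A) * c"
proof -
  interpret polymatroid "joint_ent P (\<lambda>b \<omega>. enc \<omega> b)" by (rule polymatroid_joint_ent[OF assms(1)])
  have "ent P (\<lambda>\<omega>. \<lambda>b\<in>A. enc \<omega> b) = joint_ent P (\<lambda>b \<omega>. enc \<omega> b) A" by (simp add: joint_ent_def)
  also have "\<dots> \<le> (\<Sum>b\<in>A. joint_ent P (\<lambda>b \<omega>. enc \<omega> b) {b})" by (rule subadditive[OF assms(2)])
  also have "\<dots> \<le> (\<Sum>b\<in>A. c)"
    by (intro sum_mono) (simp add: joint_ent_singleton[OF assms(1)] assms(3))
  finally show ?thesis by simp
qed

text \<open>The symbols stored on a set \<open>K\<close> of \<open>k\<close> servers are those indexed by the strings that hit \<open>K\<close>;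
  there are at least \<open>m\<close> of them, which is where the definition of \<open>m\<close> comes from.\<close>

lemma cc_m_le_card_hitting:
  assumes "0 < k" "0 < s" "s \<le> n div k" "fcrs_s0 n s < fcrs_d n s"
    and K: "K \<subseteq> servers n s" "card K = k"
  shows "cc_m n k s \<le> int (card {b \<in> cc_strings n s. \<exists>v\<in>K. b (fst v) = snd v})"
proof -
  define d where "d = fcrs_d n s"
  define Ki where "Ki i = {j. (i, j) \<in> K}" for i
  have K_sub: "K \<subseteq> {1..s+1} \<times> {1..d}" using K(1) assms(4) by (auto simp: servers_def d_def)
  have Ki_sub: "Ki i \<subseteq> {1..d}" for i using K_sub by (auto simp: Ki_def)
  then have card_Ki: "card (Ki i) \<le> d" for i by (metis card_atLeastAtMost card_mono diff_Suc_1 finite_atLeastAtMost)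
  have "{b \<in> cc_strings n s. \<forall>v\<in>K. b (fst v) \<noteq> snd v} = PiE {1..s+1} (\<lambda>i. {1..d} - Ki i)"
    using K_sub by (auto simp: cc_strings_def d_def Ki_def PiE_iff extensional_def)
  then have "card {b \<in> cc_strings n s. \<forall>v\<in>K. b (fst v) \<noteq> snd v} = (\<Prod>i\<in>{1..s+1}. d - card (Ki i))"
    using card_Diff_subset[OF finite_subset[OF Ki_sub] Ki_sub] by (simp add: card_PiE)
  moreover have "{b \<in> cc_strings n s. \<exists>v\<in>K. b (fst v) = snd v}
      = cc_strings n s - {b \<in> cc_strings n s. \<forall>v\<in>K. b (fst v) \<noteq> snd v}" by auto
  ultimately have "card {b \<in> cc_strings n s. \<exists>v\<in>K. b (fst v) = snd v}
      = d ^ (s+1) - (\<Prod>i\<in>{1..s+1}. d - card (Ki i))"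
    by (simp add: card_Diff_subset finite_cc_strings card_cc_strings d_def)
  moreover have "(\<Prod>i\<in>{1..s+1}. d - card (Ki i)) \<le> d ^ (s+1)"
    using prod_le_power[of "{1..s+1}" "\<lambda>i. d - card (Ki i)" d "s+1"] assms(4) by (simp add: d_def)
  ultimately have "int (card {b \<in> cc_strings n s. \<exists>v\<in>K. b (fst v) = snd v})
      = int d ^ (s+1) - int (\<Prod>i\<in>{1..s+1}. d - card (Ki i))"
    by (simp add: of_nat_diff)
  also have "int (\<Prod>i\<in>{1..s+1}. d - card (Ki i))
      = (\<Prod>i\<in>{1..s+1}. int d - int ((\<lambda>i\<in>{1..s+1}. card (Ki i)) i))"
    unfolding of_nat_prod by (intro prod.cong) (simp_all add: of_nat_diff card_Ki)
  also have "int d ^ (s+1) - \<dots> = cc_count n s (\<lambda>i\<in>{1..s+1}. card (Ki i))"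
    by (simp add: cc_count_def d_def)
  finally have "int (card {b \<in> cc_strings n s. \<exists>v\<in>K. b (fst v) = snd v})
      = cc_count n s (\<lambda>i\<in>{1..s+1}. card (Ki i))" .
  moreover have "cc_m n k s \<le> cc_count n s (\<lambda>i\<in>{1..s+1}. card (Ki i))"
  proof (rule cc_m_le)
    have "K = Sigma {1..s+1} Ki" using K_sub by (auto simp: Ki_def)
    moreover have "finite (Ki i)" for i using finite_subset[OF Ki_sub] by simp
    ultimately have "card K = (\<Sum>i\<in>{1..s+1}. card (Ki i))" by (simp add: card_SigmaI)
    moreover have "Ki (s+1) \<subseteq> {1..fcrs_s0 n s}" using K(1) by (auto simp: Ki_def servers_def)
    ultimately show "cc_admissible n k s (\<lambda>i\<in>{1..s+1}. card (Ki i))"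
      using K(2) card_mono[of "{1..fcrs_s0 n s}" "Ki (s+1)"] by (simp add: cc_admissible_def)
  qed
  ultimately show ?thesis by simp
qed

lemma cubic_code_recovery:
  assumes "0 < k" "0 < s" "s \<le> n div k" "fcrs_s0 n s < fcrs_d n s" and MDS: "is_MDS n k s P enc"
    and K: "K \<subseteq> servers n s" "card K = k"
  shows "is_fun_of P id (\<lambda>f. \<lambda>v\<in>K. cc_X n s enc v f)"
proof -
  let ?H = "{b \<in> cc_strings n s. \<exists>v\<in>K. b (fst v) = snd v}"
  have m_pos: "0 < cc_m n k s" using cc_m_pos_le(1) assms(1-3) by simp
  have "nat (cc_m n k s) \<le> card ?H"
    using cc_m_le_card_hitting[OF assms(1-4) K] by (simp add: nat_le_iff)
  then obtain T where T: "T \<subseteq> ?H" "card T = nat (cc_m n k s)"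
    by (rule obtain_subset_with_card_n)
  have "is_fun_of P id (\<lambda>f. \<lambda>b\<in>T. enc f b)"
    using MDS T m_pos unfolding is_MDS_def by auto
  moreover have "is_fun_of P (\<lambda>f. \<lambda>b\<in>T. enc f b) (\<lambda>f. \<lambda>v\<in>K. cc_X n s enc v f)"
    unfolding is_fun_of_def
  proof (intro exI[of _ "\<lambda>F. \<lambda>b\<in>T. F (SOME v. v \<in> K \<and> b (fst v) = snd v) b"] ballI restrict_ext)
    fix f b assume "b \<in> T"
    then have "\<exists>v. v \<in> K \<and> b (fst v) = snd v" and "b \<in> cc_strings n s" using T(1) by blast+
    then show "enc f b = (\<lambda>v\<in>K. cc_X n s enc v f) (SOME v. v \<in> K \<and> b (fst v) = snd v) b"
      by (metis (mono_tags, lifting) someI_ex restrict_apply' cc_X_def mem_Collect_eq)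
  qed
  ultimately show ?thesis by (rule is_fun_of_trans)
qed

lemma ent_cubic_code_symbols_le:
  assumes MDS: "is_MDS n k s P enc" and "B \<subseteq> cc_strings n s"
  shows "ent P (\<lambda>f. \<lambda>b\<in>B. enc f b) \<le> real (card B) * (ent P id / real_of_int (cc_m n k s))"
  using assms finite_subset[OF assms(2) finite_cc_strings]
  by (intro ent_restrict_le) (auto simp: is_MDS_def)

lemma cc_X_eq: "cc_X n s enc (i, j) = (\<lambda>f. \<lambda>b\<in>{b \<in> cc_strings n s. b i = j}. enc f b)"
  by (simp add: fun_eq_iff cc_X_def)

lemma cc_Y_eq: "cc_Y n s enc r l i j = (\<lambda>f. \<lambda>b\<in>{b \<in> cc_strings n s. b i = j \<and> b r = l}. enc f b)"
  by (simp add: fun_eq_iff cc_Y_def)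

lemma ent_cc_X_le:
  assumes MDS: "is_MDS n k s P enc" and "(i, j) \<in> servers n s" and "fcrs_s0 n s < fcrs_d n s"
  shows "ent P (cc_X n s enc (i, j)) \<le> real (fcrs_d n s) ^ s * ent P id / real_of_int (cc_m n k s)"
proof -
  have "i \<in> {1..s+1}" "j \<in> {1..fcrs_d n s}" using assms(2,3) by (auto simp: servers_def)
  then show ?thesis
    using ent_cubic_code_symbols_le[OF MDS, of "{b \<in> cc_strings n s. b i = j}"]
    by (simp add: cc_X_eq card_cc_strings_fixed1)
qed

lemma ent_cc_Y_le:
  assumes MDS: "is_MDS n k s P enc" and "(r, l) \<in> servers n s" and "fcrs_s0 n s < fcrs_d n s"
    and "i \<in> {1..s}" "i \<noteq> r" "j \<in> {1..fcrs_d n s}"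
  shows "ent P (cc_Y n s enc r l i j) \<le> real (fcrs_d n s) ^ (s - 1) * ent P id / real_of_int (cc_m n k s)"
proof -
  have "r \<in> {1..s+1}" "l \<in> {1..fcrs_d n s}" using assms(2,3) by (auto simp: servers_def)
  then show ?thesis
    using ent_cubic_code_symbols_le[OF MDS, of "{b \<in> cc_strings n s. b i = j \<and> b r = l}"] assms(4-6)
    by (simp add: cc_Y_eq card_cc_strings_fixed2)
qed

lemma cc_Y_is_fun_of_cc_X: "is_fun_of P (cc_Y n s enc r l i j) (cc_X n s enc (i, j))"
  unfolding is_fun_of_def
  by (intro exI[of _ "\<lambda>F. restrict F {b \<in> cc_strings n s. b i = j \<and> b r = l}"])
    (auto simp: cc_X_def cc_Y_def fun_eq_iff)

text \<open>Repair: the symbol \<open>C_b\<close> of server \<open>(r, l)\<close> is sent by server \<open>(i, b i)\<close>.\<close>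

lemma cc_X_is_fun_of_cc_Y:
  assumes "i \<in> {1..s+1}"
  shows "is_fun_of P (cc_X n s enc (r, l)) (\<lambda>f. \<lambda>j\<in>{1..fcrs_d n s}. cc_Y n s enc r l i j f)"
  unfolding is_fun_of_def
proof (intro exI[of _ "\<lambda>F. \<lambda>b\<in>{b \<in> cc_strings n s. b r = l}. F (b i) b"] ballI)
  fix f
  have "b i \<in> {1..fcrs_d n s}" if "b \<in> cc_strings n s" for b
    using that assms by (auto simp: cc_strings_def PiE_iff)
  then show "cc_X n s enc (r, l) f
      = (\<lambda>b\<in>{b \<in> cc_strings n s. b r = l}. (\<lambda>j\<in>{1..fcrs_d n s}. cc_Y n s enc r l i j f) (b i) b)"
    by (auto simp: cc_X_def cc_Y_def fun_eq_iff)
qed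

lemma cc_Y_is_fun_of_repaired: "is_fun_of P (\<lambda>f. \<lambda>j\<in>{1..fcrs_d n s}. cc_Y n s enc r l i j f) (cc_X n s enc (r, l))"
  unfolding is_fun_of_def
  by (intro exI[of _ "\<lambda>F. \<lambda>j\<in>{1..fcrs_d n s}. restrict F {b \<in> cc_strings n s. b i = j \<and> b r = l}"])
    (auto simp: cc_X_def cc_Y_def fun_eq_iff)

lemma cubic_code_fcrs_rbt:
  assumes "0 < k" "2 \<le> s" "s \<le> n div k" "fcrs_s0 n s < fcrs_d n s" and MDS: "is_MDS n k s P enc"
  defines "\<alpha> \<equiv> real (fcrs_d n s) ^ s * ent P id / real_of_int (cc_m n k s)"
    and "\<beta> \<equiv> real (fcrs_d n s) ^ (s - 1) * ent P id / real_of_int (cc_m n k s)"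
  shows "fcrs_rbt n k s P (cc_X n s enc) (cc_Y n s enc) \<alpha> \<beta>"
proof -
  have fin: "finite (set_pmf P)" using MDS by (simp add: is_MDS_def)
  have "\<forall>v\<in>servers n s. ent P (cc_X n s enc v) \<le> \<alpha>"
    using ent_cc_X_le[OF MDS _ assms(4)] by (auto simp: \<alpha>_def)
  moreover have "\<forall>K. K \<subseteq> servers n s \<and> card K = k \<longrightarrow> is_fun_of P id (\<lambda>f. \<lambda>v\<in>K. cc_X n s enc v f)"
    using cubic_code_recovery[OF assms(1) _ assms(3,4) MDS] assms(2) by auto
  moreover have "(\<forall>j\<in>{1..fcrs_d n s}. is_fun_of P (cc_Y n s enc r l i j) (cc_X n s enc (i, j))
        \<and> ent P (cc_Y n s enc r l i j) \<le> \<beta>)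
      \<and> is_fun_of P (cc_X n s enc (r, l)) (\<lambda>f. \<lambda>j\<in>{1..fcrs_d n s}. cc_Y n s enc r l i j f)
      \<and> cond_ent P (\<lambda>f. \<lambda>j\<in>{1..fcrs_d n s}. cc_Y n s enc r l i j f) (cc_X n s enc (r, l)) = 0"
    if "(r, l) \<in> servers n s" "i \<in> {1..s}" "i \<noteq> r" for r l i
    using that ent_cc_Y_le[OF MDS that(1) assms(4) that(2,3)] unfolding \<beta>_def
    by (intro conjI ballI cc_Y_is_fun_of_cc_X cc_X_is_fun_of_cc_Y
        cond_ent_eq_0_if_is_fun_of[OF fin cc_Y_is_fun_of_repaired]) auto
  ultimately show ?thesis
    using fin unfolding fcrs_rbt_def fcrs_def by blast
qed

section \<open>MDS codes from polynomial evaluation\<close>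

lemma eq_if_dvd_diff_range:
  fixes x y p :: int
  assumes "0 \<le> x" "x < p" "0 \<le> y" "y < p" "p dvd y - x"
  shows "y = x"
  using assms by (metis mod_eq_dvd_iff mod_pos_pos_trivial)

text \<open>Divide out one root at a time by synthetic division; distinct points of \<open>{0..<p}\<close> are distinct
  modulo \<open>p\<close>, so the quotient still vanishes at the remaining points.\<close>

lemma poly_eq_smult_prime_if_roots_mod:
  fixes p :: int
  assumes "prime p" and "finite A" and "\<And>x. x \<in> A \<Longrightarrow> 0 \<le> x \<and> x < p"
    and "Q = 0 \<or> degree Q < card A" and "\<And>x. x \<in> A \<Longrightarrow> p dvd poly Q x"
  shows "\<exists>Q'. Q = smult p Q'"
  using assms(2-5)
proof (induction A arbitrary: Q rule: finite_induct)
  case empty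
  then show ?case by (intro exI[of _ 0]) simp
next
  case (insert x A)
  define R where "R = synthetic_div Q x"
  have QR: "Q = [:-x, 1:] * R + [:poly Q x:]"
    unfolding R_def by (rule synthetic_div_correct'[symmetric])
  obtain c where c: "poly Q x = p * c" using insert.prems(3) by (auto elim: dvdE)
  have "R = 0 \<or> degree R < card A"
    using insert.prems(2) insert.hyps by (auto simp: R_def degree_synthetic_div synthetic_div_eq_0_iff)
  moreover have "p dvd poly R y" if y: "y \<in> A" for y
  proof -
    have "(y - x) * poly R y = poly Q y - poly Q x"
      using arg_cong[where f = "\<lambda>q. poly q y", OF QR] by (simp add: algebra_simps)
    then have "p dvd (y - x) * poly R y" using insert.prems(3) y by (simp add: dvd_diff)
    moreover have "\<not> p dvd (y - x)"
      using eq_if_dvd_diff_range[of x p y] insert.prems(1) insert.hyps(2) y by force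
    ultimately show ?thesis using \<open>prime p\<close> by (simp add: prime_dvd_mult_iff)
  qed
  ultimately obtain R' where "R = smult p R'"
    using insert.IH insert.prems(1) by force
  then have "Q = smult p ([:-x, 1:] * R' + [:c:])"
    using QR c by (simp add: smult_add_right mult_smult_right)
  then show ?case by blast
qed

lemma coeffs_eq_if_evals_cong:
  fixes p m :: nat and a a' :: "nat \<Rightarrow> nat" and A :: "int set"
  assumes "prime p" and "finite A" and "card A = m" and A: "\<And>x. x \<in> A \<Longrightarrow> 0 \<le> x \<and> x < int p"
    and a: "\<And>e. e < m \<Longrightarrow> a e < p" "\<And>e. e < m \<Longrightarrow> a' e < p"
    and eq: "\<And>x. x \<in> A \<Longrightarrow> int p dvd (\<Sum>e<m. int (a e) * x ^ e) - (\<Sum>e<m. int (a' e) * x ^ e)"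
    and "e < m"
  shows "a e = a' e"
proof -
  define c where "c e = int (a e) - int (a' e)" for e
  define Q where "Q = (\<Sum>e<m. monom (c e) e)"
  have coeff_Q: "coeff Q e' = c e'" if "e' < m" for e'
    using that by (simp add: Q_def coeff_sum coeff_monom)
  have "Q = 0 \<or> degree Q < card A"
  proof (cases "m = 0")
    case False
    have "degree Q \<le> m - 1" unfolding Q_def
      by (rule degree_sum_le) (use False in \<open>auto intro: order_trans[OF degree_monom_le]\<close>)
    then show ?thesis using False assms(3) by auto
  qed (simp add: Q_def)
  moreover have "poly Q x = (\<Sum>e<m. int (a e) * x ^ e) - (\<Sum>e<m. int (a' e) * x ^ e)" for x
    by (simp add: Q_def poly_sum poly_monom c_def sum_subtractf algebra_simps)
  ultimately obtain Q' where "Q = smult (int p) Q'"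
    using poly_eq_smult_prime_if_roots_mod[of "int p" A Q] assms(1,2) A eq by auto
  then have "int p dvd c e" using coeff_Q[OF \<open>e < m\<close>] by (metis coeff_smult dvd_triv_left)
  moreover have "\<bar>c e\<bar> < int p" using a[OF \<open>e < m\<close>] by (simp add: c_def abs_if)
  ultimately have "c e = 0" by (metis dvd_imp_le_int abs_of_nat not_le)
  then show ?thesis by (simp add: c_def)
qed

lemma inj_on_poly_eval_mod:
  fixes p m :: nat and idx :: "'b \<Rightarrow> nat"
  assumes "prime p" and "finite T" and "inj_on idx T" and "idx ` T \<subseteq> {..<p}" and "card T = m"
  shows "inj_on (\<lambda>a. \<lambda>b\<in>T. (\<Sum>e<m. a e * idx b ^ e) mod p) (PiE {..<m} (\<lambda>_. {..<p}))"
proof (rule inj_onI)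
  fix a a' assume a: "a \<in> PiE {..<m} (\<lambda>_. {..<p})" and a': "a' \<in> PiE {..<m} (\<lambda>_. {..<p})"
    and eq: "(\<lambda>b\<in>T. (\<Sum>e<m. a e * idx b ^ e) mod p) = (\<lambda>b\<in>T. (\<Sum>e<m. a' e * idx b ^ e) mod p)"
  let ?A = "(\<lambda>b. int (idx b)) ` T"
  have "int p dvd (\<Sum>e<m. int (a e) * x ^ e) - (\<Sum>e<m. int (a' e) * x ^ e)" if "x \<in> ?A" for x
  proof -
    obtain b where b: "b \<in> T" "x = int (idx b)" using \<open>x \<in> ?A\<close> by blast
    then have "(\<Sum>e<m. a e * idx b ^ e) mod p = (\<Sum>e<m. a' e * idx b ^ e) mod p"
      using fun_cong[OF eq, of b] by simp
    then have "int (\<Sum>e<m. a e * idx b ^ e) mod int p = int (\<Sum>e<m. a' e * idx b ^ e) mod int p"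
      by (metis of_nat_mod)
    then show ?thesis by (simp add: b(2) mod_eq_dvd_iff of_nat_sum)
  qed
  moreover have "card ?A = m" using assms(3,5) by (simp add: card_image inj_on_def)
  ultimately have "a e = a' e" if "e < m" for e
    using coeffs_eq_if_evals_cong[OF assms(1) _ _ _ _ _ _ that, of ?A a a'] a a' assms(2,4)
    by (fastforce simp: PiE_iff)
  then show "a = a'"
    using a a' by (metis PiE_ext lessThan_iff)
qed

lemma is_fun_of_id_if_inj_on: "inj_on F (set_pmf P) \<Longrightarrow> is_fun_of P id F"
  unfolding is_fun_of_def by (intro exI[of _ "the_inv_into (set_pmf P) F"]) (simp add: the_inv_into_f_f)

text \<open>A Reed-Solomon code over \<open>\<int>/p\<close> for a prime \<open>p\<close> exceeding the number of index strings: the file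
  is uniformly distributed over the coefficient vectors of the polynomials of degree \<open>< m\<close>, and the
  symbol \<open>C_b\<close> is the value at the number of \<open>b\<close> in some enumeration of the index strings.\<close>

lemma mds_code_exists:
  assumes "0 < k" "0 < s" "s \<le> n div k"
  shows "\<exists>(P :: (nat \<Rightarrow> nat) pmf) (enc :: (nat \<Rightarrow> nat) \<Rightarrow> (nat \<Rightarrow> nat) \<Rightarrow> nat).
      is_MDS n k s P enc \<and> 0 < ent P id"
proof -
  define m where "m = nat (cc_m n k s)"
  have m: "int m = cc_m n k s" "1 \<le> m" using cc_m_pos_le(1)[OF assms(1,3,2)] by (auto simp: m_def)
  obtain p :: nat where p: "prime p" "card (cc_strings n s) < p" using bigger_prime by blast
  have p2: "2 \<le> p" using p(1) by (simp add: prime_ge_2_nat)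
  obtain idx where idx: "bij_betw idx (cc_strings n s) {..<card (cc_strings n s)}"
    using ex_bij_betw_finite_nat[OF finite_cc_strings] by (auto simp: atLeast0LessThan)
  define Files where "Files = PiE {..<m} (\<lambda>_. {..<p})"
  define P where "P = pmf_of_set Files"
  define enc where "enc a b = (\<Sum>e<m. a e * idx b ^ e) mod p" for a b
  have Files: "finite Files" "Files \<noteq> {}" "card Files = p ^ m"
    using p2 by (auto simp: Files_def finite_PiE PiE_eq_empty_iff card_PiE lessThan_empty_iff)
  then have set_P: "set_pmf P = Files" by (simp add: P_def)
  have ent_P: "ent P id = real m * log 2 p"
    using ent_pmf_of_set[OF Files(1,2)] Files(3) p2 by (simp add: P_def log_nat_power)
  have "ent P (\<lambda>f. enc f b) \<le> ent P id / real_of_int (cc_m n k s)" for b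
  proof -
    have "ent P (\<lambda>f. enc f b) \<le> log 2 (card {..<p})"
      using p2 by (intro ent_le_log_card_subset) (auto simp: set_P Files(1) enc_def)
    then show ?thesis using m by (simp add: ent_P flip: m(1))
  qed
  moreover have "is_fun_of P id (\<lambda>f. \<lambda>b\<in>T. enc f b)" if "T \<subseteq> cc_strings n s" "int (card T) = cc_m n k s" for T
  proof (rule is_fun_of_id_if_inj_on)
    have "inj_on idx T" using that(1) idx by (auto simp: bij_betw_def intro: inj_on_subset)
    moreover have "idx ` T \<subseteq> {..<p}"
      using image_mono[OF that(1), of idx] bij_betw_imp_surj_on[OF idx] p(2) by auto
    ultimately show "inj_on (\<lambda>f. \<lambda>b\<in>T. enc f b) (set_pmf P)"
      unfolding set_P Files_def enc_def
      by (intro inj_on_poly_eval_mod[OF p(1)]) (use that m finite_subset[OF _ finite_cc_strings] in auto)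
  qed
  ultimately have "is_MDS n k s P enc"
    unfolding is_MDS_def using Files(1) set_P by auto
  moreover have "0 < ent P id" using m(2) p2 by (simp add: ent_P)
  ultimately show ?thesis by blast
qed

theorem theorem4:
  fixes n k s :: nat
  assumes "0 < n" and "0 < k" and "2 \<le> s" and "s \<le> n div k"
    and "fcrs_s0 n s < min (fcrs_d n s) s"
  shows
    \<comment> \<open>lower bound: every FCRS repair-by-transfer scheme\<close>
    "(\<forall>(P :: 'f pmf) (X :: nat \<times> nat \<Rightarrow> 'f \<Rightarrow> 'a) (Y :: nat \<Rightarrow> nat \<Rightarrow> nat \<Rightarrow> nat \<Rightarrow> 'f \<Rightarrow> 'b) \<alpha> \<beta>.
        fcrs_rbt n k s P X Y \<alpha> \<beta> \<longrightarrow> real (fcrs_d n s) * \<beta> \<ge> gamma_cc n k s (ent P id))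
     \<and> \<comment> \<open>the Cubic Code built from any (d^(s+1), m) MDS code achieves gamma_cc\<close>
     (\<forall>(P :: 'g pmf) (enc :: 'g \<Rightarrow> (nat \<Rightarrow> nat) \<Rightarrow> 'c). is_MDS n k s P enc \<longrightarrow>
        (let M = ent P id; m = real_of_int (cc_m n k s);
             \<alpha> = real (fcrs_d n s) ^ s * M / m;
             \<beta> = real (fcrs_d n s) ^ (s - 1) * M / m
         in fcrs_rbt n k s P (cc_X n s enc) (cc_Y n s enc) \<alpha> \<beta>
            \<and> real (fcrs_d n s) * \<beta> = gamma_cc n k s M))
     \<and> \<comment> \<open>such MDS codes exist, for a file of positive entropy\<close>
     (\<exists>(P :: (nat \<Rightarrow> nat) pmf) (enc :: (nat \<Rightarrow> nat) \<Rightarrow> (nat \<Rightarrow> nat) \<Rightarrow> nat).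
        is_MDS n k s P enc \<and> ent P id > 0)"
proof -
  have "0 < s" and s0_lt_d: "fcrs_s0 n s < fcrs_d n s" using assms(3,5) by simp_all
  then have "real (fcrs_d n s) * real (fcrs_d n s) ^ (s - 1) = real (fcrs_d n s) ^ s"
    by (simp add: power_eq_if)
  then show ?thesis
    using fcrs_rbt_bandwidth_ge[OF assms(2-4)] cubic_code_fcrs_rbt[OF assms(2-4) s0_lt_d]
      mds_code_exists[OF assms(2) \<open>0 < s\<close> assms(4)]
    by (auto simp: Let_def gamma_cc_def)
qed

end
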